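(* Let $p\in[1,\infty)$, let $(X,\mathcal{B},\mu)$ be a $\sigma$-finite measure space, and let $\rho\colon L_\infty\to L(L^p(X,\mu))$ be a spatial representation. Let $E$ be a Banach space, and suppose there is a nonzero continuous homomorphism $\varphi\colon\overline{\rho(L_\infty)}\to L(E)$. Then $l^p(\mathbb{Z}_{>0})$ is isomorphic as a Banach space (via a bounded linear bijection with bounded inverse) to a closed subspace of $E$.
   Context: $L_\infty$ is the universal complex unital algebra generated by $s_1,s_2,\dots,t_1,t_2,\dots$ with $t_js_j=1$ and $t_js_k=0$ for $j\ne k$. A representation is a unital algebra homomorphism into $L(E)$. A representation $\rho$ on $L^p(X,\mu)$ is spatial if each $\rho(s_j)$, $\rho(t_j)$ is a spatial partial isometry with $\rho(t_j)$ the reverse of $\rho(s_j)$. Spatial partial isometries: Let $(X,\mathcal{B},\mu)$, $(Y,\mathcal{C},\nu)$ be $\sigma$-finite measure spaces, $\mathcal{N}(\mu)$ the $\mu$-null sets, $\mathcal{B}/\mathcal{N}(\mu)$ the Boolean $\sigma$-algebra of measurable sets modulo null sets. A measurable set transformation is a map $S\colon\mathcal{B}/\mathcal{N}(\mu)\to\mathcal{C}/\mathcal{N}(\nu)$ which is a Boolean algebra homomorphism preserving countable unions; it induces a unique linear map $S_*$ on measurable functions mod a.e. equality with $S_*(\chi_E)=\chi_{S(E)}$ preserving a.e. limits of sequences; for bijective $S$, $S_*(\mu)(F)=\mu(E)$ when $S([E])=[F]$. A spatial system is $(E,F,S,g)$ with $E\in\mathcal{B}$, $F\in\mathcal{C}$,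 $S$ a bijective measurable set transformation from $(E,\mu|_E)$ to $(F,\nu|_F)$, $g$ measurable on $F$ with $|g|=1$ a.e.; the associated spatial partial isometry is $(s\xi)(y)=g(y)[\tfrac{dS_*(\mu|_E)}{d\nu|_F}(y)]^{1/p}S_*(\xi|_E)(y)$ on $F$ and $0$ off $F$; its reverse has spatial system $(F,E,S^{-1},(S^{-1})_*(g)^{-1})$. *)

theory Defs
  imports "HOL-Analysis.Analysis"
begin

section \<open>L^p(X,mu) modelled by representatives (functions X => complex, mod a.e. equality)\<close>

definition Lp_set :: "'a measure \<Rightarrow> real \<Rightarrow> ('a \<Rightarrow> complex) set" where
  "Lp_set M p = {f. f \<in> borel_measurable M \<and> integrable M (\<lambda>x. cmod (f x) powr p)}"

definition Lp_norm :: "'a measure \<Rightarrow> real \<Rightarrow> ('a \<Rightarrow> complex) \<Rightarrow> real" where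
  "Lp_norm M p f = (\<integral>x. cmod (f x) powr p \<partial>M) powr (1 / p)"

type_synonym 'a lpop = "('a \<Rightarrow> complex) \<Rightarrow> ('a \<Rightarrow> complex)"

definition lp_op :: "'a measure \<Rightarrow> real \<Rightarrow> 'a lpop \<Rightarrow> bool" where
  "lp_op M p T \<longleftrightarrow>
     (\<forall>f\<in>Lp_set M p. T f \<in> Lp_set M p) \<and>
     (\<forall>f\<in>Lp_set M p. \<forall>g\<in>Lp_set M p. (AE x in M. f x = g x) \<longrightarrow> (AE x in M. T f x = T g x)) \<and>
     (\<forall>f\<in>Lp_set M p. \<forall>g\<in>Lp_set M p. \<forall>c::complex.
        AE x in M. T (\<lambda>y. c * f y + g y) x = c * T f x + T g x) \<and>
     (\<exists>C. \<forall>f\<in>Lp_set M p. Lp_norm M p (T f) \<le> C * Lp_norm M p f)"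

text \<open>Equality of operators (as elements of L(L^p)).\<close>
definition lp_opeq :: "'a measure \<Rightarrow> real \<Rightarrow> 'a lpop \<Rightarrow> 'a lpop \<Rightarrow> bool" where
  "lp_opeq M p T U \<longleftrightarrow> (\<forall>f\<in>Lp_set M p. AE x in M. T f x = U f x)"

definition lp_opnorm :: "'a measure \<Rightarrow> real \<Rightarrow> 'a lpop \<Rightarrow> real" where
  "lp_opnorm M p T = Sup {Lp_norm M p (T f) | f. f \<in> Lp_set M p \<and> Lp_norm M p f \<le> 1}"

definition ae_seteq :: "'a measure \<Rightarrow> 'a set \<Rightarrow> 'a set \<Rightarrow> bool" where
  "ae_seteq M A B \<longleftrightarrow> (A - B) \<union> (B - A) \<in> null_sets M"

text \<open>S is a measurable set transformation from (E, mu|E) to (F, mu|F), given by its action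
  on representatives of classes of measurable subsets of E.\<close>
definition mst :: "'a measure \<Rightarrow> 'a set \<Rightarrow> 'a set \<Rightarrow> ('a set \<Rightarrow> 'a set) \<Rightarrow> bool" where
  "mst M E F S \<longleftrightarrow>
     (\<forall>A. A \<in> sets M \<and> A \<subseteq> E \<longrightarrow> S A \<in> sets M \<and> S A \<subseteq> F) \<and>
     (\<forall>A B. A \<in> sets M \<and> A \<subseteq> E \<and> B \<in> sets M \<and> B \<subseteq> E \<and> ae_seteq M A B
        \<longrightarrow> ae_seteq M (S A) (S B)) \<and>
     ae_seteq M (S E) F \<and>
     (\<forall>A. A \<in> sets M \<and> A \<subseteq> E \<longrightarrow> ae_seteq M (S (E - A)) (F - S A)) \<and>
     (\<forall>As::nat \<Rightarrow> 'a set. (\<forall>n. As n \<in> sets M \<and> As n \<subseteq> E)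
        \<longrightarrow> ae_seteq M (S (\<Union>n. As n)) (\<Union>n. S (As n)))"

definition mst_bij :: "'a measure \<Rightarrow> 'a set \<Rightarrow> 'a set \<Rightarrow> ('a set \<Rightarrow> 'a set) \<Rightarrow> bool" where
  "mst_bij M E F S \<longleftrightarrow> mst M E F S \<and>
     (\<forall>A B. A \<in> sets M \<and> A \<subseteq> E \<and> B \<in> sets M \<and> B \<subseteq> E \<and> ae_seteq M (S A) (S B)
        \<longrightarrow> ae_seteq M A B) \<and>
     (\<forall>B. B \<in> sets M \<and> B \<subseteq> F \<longrightarrow> (\<exists>A. A \<in> sets M \<and> A \<subseteq> E \<and> ae_seteq M (S A) B))"

definition mst_inverse :: "'a measure \<Rightarrow> 'a set \<Rightarrow> 'a set \<Rightarrow> ('a set \<Rightarrow> 'a set) \<Rightarrow> ('a set \<Rightarrow> 'a set) \<Rightarrow> bool" where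
  "mst_inverse M E F S S' \<longleftrightarrow>
     (\<forall>A. A \<in> sets M \<and> A \<subseteq> E \<longrightarrow> ae_seteq M (S' (S A)) A) \<and>
     (\<forall>B. B \<in> sets M \<and> B \<subseteq> F \<longrightarrow> ae_seteq M (S (S' B)) B)"

text \<open>Functions on E are
  represented by measurable functions on X whose values off E are ignored.\<close>
definition induced_map :: "'a measure \<Rightarrow> 'a set \<Rightarrow> 'a set \<Rightarrow> ('a set \<Rightarrow> 'a set) \<Rightarrow> 'a lpop \<Rightarrow> bool" where
  "induced_map M E F S Tf \<longleftrightarrow>
     (\<forall>\<xi>\<in>borel_measurable M. Tf \<xi> \<in> borel_measurable M) \<and>
     (\<forall>\<xi>\<in>borel_measurable M. \<forall>\<eta>\<in>borel_measurable M.
        (AE x in M. x \<in> E \<longrightarrow> \<xi> x = \<eta> x) \<longrightarrow> (AE y in M. y \<in> F \<longrightarrow> Tf \<xi> y = Tf \<eta> y)) \<and>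
     (\<forall>\<xi>\<in>borel_measurable M. \<forall>\<eta>\<in>borel_measurable M. \<forall>c::complex.
        AE y in M. y \<in> F \<longrightarrow> Tf (\<lambda>x. c * \<xi> x + \<eta> x) y = c * Tf \<xi> y + Tf \<eta> y) \<and>
     (\<forall>A. A \<in> sets M \<and> A \<subseteq> E \<longrightarrow>
        (AE y in M. y \<in> F \<longrightarrow> Tf (indicator A) y = indicator (S A) y)) \<and>
     (\<forall>\<xi>s \<xi>. (\<forall>n. \<xi>s n \<in> borel_measurable M) \<and> \<xi> \<in> borel_measurable M \<and>
        (AE x in M. x \<in> E \<longrightarrow> (\<lambda>n. \<xi>s n x) \<longlonglongrightarrow> \<xi> x)
        \<longrightarrow> (AE y in M. y \<in> F \<longrightarrow> (\<lambda>n. Tf (\<xi>s n) y) \<longlonglongrightarrow> Tf \<xi> y))"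

text \<open>s is (a representative of) the spatial partial isometry with spatial system (E,F,S,g);
  Tf is S_*, and h is the Radon--Nikodym derivative d S_*(mu|E) / d mu|F.\<close>
definition spatial_op :: "'a measure \<Rightarrow> real \<Rightarrow> 'a set \<Rightarrow> 'a set \<Rightarrow> ('a set \<Rightarrow> 'a set)
    \<Rightarrow> ('a \<Rightarrow> complex) \<Rightarrow> 'a lpop \<Rightarrow> 'a lpop \<Rightarrow> bool" where
  "spatial_op M p E F S g Tf s \<longleftrightarrow>
     E \<in> sets M \<and> F \<in> sets M \<and> mst_bij M E F S \<and> induced_map M E F S Tf \<and>
     g \<in> borel_measurable M \<and> (AE y in M. y \<in> F \<longrightarrow> cmod (g y) = 1) \<and>
     (\<exists>h::'a \<Rightarrow> real. h \<in> borel_measurable M \<and> (\<forall>y. 0 \<le> h y) \<and>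
        (\<forall>A. A \<in> sets M \<and> A \<subseteq> E \<longrightarrow>
           (\<integral>\<^sup>+ y. ennreal (h y) * indicator (S A) y \<partial>M) = emeasure M A) \<and>
        (\<forall>\<xi>\<in>Lp_set M p. AE y in M.
           s \<xi> y = (if y \<in> F then g y * complex_of_real (h y powr (1 / p)) * Tf \<xi> y else 0)))"

text \<open>s is a spatial partial isometry and t is its reverse, with spatial system
  (F, E, S^-1, (S^-1)_*(g)^-1).\<close>
definition spatial_pair :: "'a measure \<Rightarrow> real \<Rightarrow> 'a lpop \<Rightarrow> 'a lpop \<Rightarrow> bool" where
  "spatial_pair M p s t \<longleftrightarrow>
     (\<exists>E F S g Tf S' Tf'. spatial_op M p E F S g Tf s \<and> mst_inverse M E F S S' \<and>
        spatial_op M p F E S' (\<lambda>x. inverse (Tf' g x)) Tf' t)"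

text \<open>A representation of L_infty is determined (universal property) by the images
  Sg j = rho(s_j), Tg j = rho(t_j); rho(L_infty) is the linear span of all finite words
  in these generators (the empty word being the identity).\<close>
definition word_op :: "(nat \<Rightarrow> 'a lpop) \<Rightarrow> (nat \<Rightarrow> 'a lpop) \<Rightarrow> (bool \<times> nat) list \<Rightarrow> 'a lpop" where
  "word_op Sg Tg w = foldr (\<lambda>(b, j) acc. (if b then Sg j else Tg j) \<circ> acc) w id"

definition rho_image :: "(nat \<Rightarrow> 'a lpop) \<Rightarrow> (nat \<Rightarrow> 'a lpop) \<Rightarrow> 'a lpop set" where
  "rho_image Sg Tg = {(\<lambda>f x. \<Sum>i<n. c i * word_op Sg Tg (w i) f x) | (n::nat) c w. True}"

definition rho_closure :: "'a measure \<Rightarrow> real \<Rightarrow> (nat \<Rightarrow> 'a lpop) \<Rightarrow> (nat \<Rightarrow> 'a lpop) \<Rightarrow> 'a lpop set" where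
  "rho_closure M p Sg Tg = {T. lp_op M p T \<and>
     (\<forall>\<epsilon>>0. \<exists>A\<in>rho_image Sg Tg. lp_opnorm M p (\<lambda>f x. T f x - A f x) < \<epsilon>)}"

definition spatial_rep :: "'a measure \<Rightarrow> real \<Rightarrow> (nat \<Rightarrow> 'a lpop) \<Rightarrow> (nat \<Rightarrow> 'a lpop) \<Rightarrow> bool" where
  "spatial_rep M p Sg Tg \<longleftrightarrow>
     (\<forall>j. lp_op M p (Sg j) \<and> lp_op M p (Tg j)) \<and>
     (\<forall>j. lp_opeq M p (Tg j \<circ> Sg j) id) \<and>
     (\<forall>j k. j \<noteq> k \<longrightarrow> lp_opeq M p (Tg j \<circ> Sg k) (\<lambda>f x. 0)) \<and>
     (\<forall>j. spatial_pair M p (Sg j) (Tg j))"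

text \<open>A complex Banach space: a real Banach space type with a compatible complex scalar
  multiplication cm.\<close>
definition complex_scaling :: "(complex \<Rightarrow> 'e::real_normed_vector \<Rightarrow> 'e) \<Rightarrow> bool" where
  "complex_scaling cm \<longleftrightarrow>
     (\<forall>x. cm 1 x = x) \<and> (\<forall>a b x. cm a (cm b x) = cm (a * b) x) \<and>
     (\<forall>a b x. cm (a + b) x = cm a x + cm b x) \<and> (\<forall>a x y. cm a (x + y) = cm a x + cm a y) \<and>
     (\<forall>r x. cm (complex_of_real r) x = r *\<^sub>R x) \<and> (\<forall>a x. norm (cm a x) = cmod a * norm x)"

definition cbl :: "(complex \<Rightarrow> 'e::real_normed_vector \<Rightarrow> 'e) \<Rightarrow> ('e \<Rightarrow> 'e) \<Rightarrow> bool" where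
  "cbl cm f \<longleftrightarrow> bounded_linear f \<and> (\<forall>c x. f (cm c x) = cm c (f x))"

definition cont_hom_nonzero :: "'a measure \<Rightarrow> real \<Rightarrow> 'a lpop set \<Rightarrow>
    (complex \<Rightarrow> 'e::real_normed_vector \<Rightarrow> 'e) \<Rightarrow> ('a lpop \<Rightarrow> 'e \<Rightarrow> 'e) \<Rightarrow> bool" where
  "cont_hom_nonzero M p D cm \<phi> \<longleftrightarrow>
     (\<forall>T\<in>D. cbl cm (\<phi> T)) \<and>
     (\<forall>T\<in>D. \<forall>U\<in>D. lp_opeq M p T U \<longrightarrow> \<phi> T = \<phi> U) \<and>
     (\<forall>T\<in>D. \<forall>U\<in>D. \<phi> (\<lambda>f x. T f x + U f x) = (\<lambda>v. \<phi> T v + \<phi> U v)) \<and>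
     (\<forall>T\<in>D. \<forall>c. \<phi> (\<lambda>f x. c * T f x) = (\<lambda>v. cm c (\<phi> T v))) \<and>
     (\<forall>T\<in>D. \<forall>U\<in>D. \<phi> (T \<circ> U) = \<phi> T \<circ> \<phi> U) \<and>
     (\<forall>T\<in>D. \<forall>\<epsilon>>0. \<exists>\<delta>>0. \<forall>U\<in>D.
        lp_opnorm M p (\<lambda>f x. T f x - U f x) < \<delta> \<longrightarrow> onorm (\<lambda>v. \<phi> T v - \<phi> U v) < \<epsilon>) \<and>
     (\<exists>T\<in>D. \<exists>v. \<phi> T v \<noteq> 0)"

definition lp_seq :: "real \<Rightarrow> (nat \<Rightarrow> complex) set" where
  "lp_seq p = {x. summable (\<lambda>n. cmod (x n) powr p)}"

definition lp_seq_norm :: "real \<Rightarrow> (nat \<Rightarrow> complex) \<Rightarrow> real" where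
  "lp_seq_norm p x = (\<Sum>n. cmod (x n) powr p) powr (1 / p)"

definition lp_embeds :: "real \<Rightarrow> (complex \<Rightarrow> 'e::real_normed_vector \<Rightarrow> 'e) \<Rightarrow> bool" where
  "lp_embeds p cm \<longleftrightarrow>
     (\<exists>V J. closed V \<and> 0 \<in> V \<and> (\<forall>x\<in>V. \<forall>y\<in>V. x + y \<in> V) \<and> (\<forall>c. \<forall>x\<in>V. cm c x \<in> V) \<and>
        (\<forall>x\<in>lp_seq p. \<forall>y\<in>lp_seq p. \<forall>c. J (\<lambda>n. c * x n + y n) = cm c (J x) + J y) \<and>
        bij_betw J (lp_seq p) V \<and>
        (\<exists>C. \<forall>x\<in>lp_seq p. norm (J x) \<le> C * lp_seq_norm p x) \<and>
        (\<exists>C. \<forall>x\<in>lp_seq p. lp_seq_norm p x \<le> C * norm (J x)))"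

end

theory Submission
  imports Defs
begin

(* Write s_j = rho(s_j), t_j = rho(t_j).  Each s_j is a spatial partial isometry from
   L^p(E_j) onto L^p(F_j) with reverse t_j; the change-of-variables formula for the induced
   map S_* shows that s_j and t_j preserve the p-th power integral on these sets, and the
   relations t_j s_k = 0 for j <> k force the ranges F_j to be a.e. disjoint (here
   sigma-finiteness is used).  Hence the "matrix units" e_jk = s_j t_k satisfy
   e_jk e_lm = delta_kl e_jm, and for finitely many coefficients c the column combination
   sum_k c_k e_k0 and the row combination sum_j c_j e_0j are bounded on L^p in terms of the
   l^p-norm of c (a discrete Hoelder inequality handles the row).  Continuity of phi at 0
   converts these bounds into bounds for phi(.) on E.  Choosing eta = phi(e_00) xi <> 0 and eta_k = phi(e_k0) eta, the map
   J x = sum_k x_k eta_k is a linear embedding of l^p with ||J x|| <= C1 ||x||_p (column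
   bound) and ||x||_p <= C2 ||J x|| (row bound, tested against phi(e_0j)).  Completeness of
   l^p then makes the range of J closed. *)

text \<open>A crude quasi-triangle inequality for p-th powers; it suffices to see that L^p and l^p
  are closed under addition.\<close>
lemma norm_add_powr_le:
  fixes a b :: complex and p :: real
  assumes "1 \<le> p"
  shows "cmod (a + b) powr p \<le> 2 powr p * (cmod a powr p + cmod b powr p)"
proof -
  have "cmod (a + b) \<le> 2 * max (cmod a) (cmod b)"
    using norm_triangle_ineq[of a b] by linarith
  hence "cmod (a + b) powr p \<le> (2 * max (cmod a) (cmod b)) powr p"
    using assms by (intro powr_mono2) auto
  also have "\<dots> = 2 powr p * max (cmod a) (cmod b) powr p"
    by (simp add: powr_mult)
  also have "max (cmod a) (cmod b) powr p \<le> cmod a powr p + cmod b powr p"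
    by (cases "cmod a \<le> cmod b") (auto simp: max_def)
  hence "2 powr p * max (cmod a) (cmod b) powr p \<le> 2 powr p * (cmod a powr p + cmod b powr p)"
    by (intro mult_left_mono) auto
  finally show ?thesis .
qed

lemma max_powr:
  fixes a b r :: real
  assumes "0 \<le> a" "0 \<le> b" "0 \<le> r"
  shows "max a b powr r = max (a powr r) (b powr r)"
proof (cases "a \<le> b")
  case True
  then have "a powr r \<le> b powr r" using assms by (intro powr_mono2) auto
  then show ?thesis using True by (simp add: max_def)
next
  case False
  then have "b powr r \<le> a powr r" using assms by (intro powr_mono2) auto
  then show ?thesis using False by (simp add: max_def)
qed

text \<open>\<open>x \<mapsto> x powr p\<close> is convex on the closed half-line (the library covers only the open one).\<close>
lemma convex_on_powr_nonneg:
  fixes p :: real assumes p: "1 \<le> p"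
  shows "convex_on {0..} (\<lambda>x. x powr p)"
proof (rule convex_onI)
  show "convex {0::real..}" by (rule convex_real_interval)
  fix t x y :: real assume t: "0 < t" "t < 1" and x: "x \<in> {0..}" and y: "y \<in> {0..}"
  have tp: "s powr p \<le> s" if "0 \<le> s" "s \<le> 1" for s :: real
    using powr_mono'[of 1 p s] that p by simp
  show "((1 - t) *\<^sub>R x + t *\<^sub>R y) powr p \<le> (1 - t) * x powr p + t * y powr p"
  proof (cases "x = 0")
    case True
    have "(t * y) powr p = t powr p * y powr p" by (simp add: powr_mult)
    also have "\<dots> \<le> t * y powr p" using tp[of t] t by (intro mult_right_mono) auto
    finally show ?thesis using True p by simp
  next
    case xne: False
    show ?thesis
    proof (cases "y = 0")
      case True
      have "((1 - t) * x) powr p = (1 - t) powr p * x powr p" by (simp add: powr_mult)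
      also have "\<dots> \<le> (1 - t) * x powr p" using tp[of "1 - t"] t by (intro mult_right_mono) auto
      finally show ?thesis using True p by simp
    next
      case False
      then have "x \<in> {0<..}" "y \<in> {0<..}" using x y xne by auto
      then show ?thesis using convex_onD[OF powr_convex[OF p], of t x y] t by simp
    qed
  qed
qed

text \<open>First for strictly positive a_j,
  by Jensen's inequality for the weights a_j^p / sum a^p and the points b_j / a_j; then in
  general by discarding the zero weights.\<close>
lemma holder_weighted_sum_pos:
  fixes a b :: "'i \<Rightarrow> real" and p :: real
  assumes p: "1 \<le> p" and fin: "finite K" and ne: "K \<noteq> {}"
    and apos: "\<And>j. j \<in> K \<Longrightarrow> 0 < a j" and b0: "\<And>j. 0 \<le> b j"
  shows "(\<Sum>j\<in>K. a j powr (p - 1) * b j) powr p \<le> (\<Sum>j\<in>K. a j powr p) powr (p - 1) * (\<Sum>j\<in>K. b j powr p)"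
proof -
  define S where "S = (\<Sum>j\<in>K. a j powr p)"
  have Spos: "0 < S" unfolding S_def by (rule sum_pos[OF fin ne]) (use apos in force)
  define w where "w = (\<lambda>j. a j powr p / S)"
  define v where "v = (\<lambda>j. b j / a j)"
  have wsum: "(\<Sum>j\<in>K. w j) = 1" using Spos by (simp add: w_def S_def sum_divide_distrib[symmetric])
  have w0: "j \<in> K \<Longrightarrow> 0 \<le> w j" for j using Spos by (simp add: w_def)
  have v0: "j \<in> K \<Longrightarrow> v j \<in> {0..}" for j using apos[of j] b0[of j] by (simp add: v_def)
  have jensen: "(\<Sum>j\<in>K. w j *\<^sub>R v j) powr p \<le> (\<Sum>j\<in>K. w j * v j powr p)"
    by (rule convex_on_sum[OF fin ne convex_on_powr_nonneg[OF p] wsum w0 v0])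
  have wv: "w j * v j = a j powr (p - 1) * b j / S" if "j \<in> K" for j
  proof -
    have "a j powr (p - 1) * a j powr 1 = a j powr p" by (simp only: powr_add[symmetric]) simp
    then have "a j powr p = a j powr (p - 1) * a j" using apos[OF that] by simp
    then show ?thesis unfolding w_def v_def using apos[OF that] Spos by (simp add: field_simps)
  qed
  have wvp: "w j * v j powr p = b j powr p / S" if "j \<in> K" for j
    using apos[OF that] b0[of j] Spos unfolding w_def v_def by (simp add: powr_divide field_simps)
  have mean: "(\<Sum>j\<in>K. w j *\<^sub>R v j) = (\<Sum>j\<in>K. a j powr (p - 1) * b j) / S"
    using wv by (simp add: sum_divide_distrib)
  have "(\<Sum>j\<in>K. a j powr (p - 1) * b j) powr p = (S * ((\<Sum>j\<in>K. a j powr (p - 1) * b j) / S)) powr p"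
    using Spos by simp
  also have "\<dots> = S powr p * ((\<Sum>j\<in>K. a j powr (p - 1) * b j) / S) powr p"
    by (rule powr_mult)
  also have "\<dots> \<le> S powr p * ((\<Sum>j\<in>K. b j powr p) / S)"
    using jensen mean wvp by (intro mult_left_mono) (auto simp: sum_divide_distrib)
  also have "\<dots> = S powr (p - 1) * (\<Sum>j\<in>K. b j powr p)"
    using Spos by (simp add: powr_diff field_simps)
  finally show ?thesis by (simp add: S_def)
qed

lemma holder_weighted_sum:
  fixes a b :: "'i \<Rightarrow> real" and p :: real
  assumes p: "1 \<le> p" and fin: "finite J" and a0: "\<And>j. 0 \<le> a j" and b0: "\<And>j. 0 \<le> b j"
  shows "(\<Sum>j\<in>J. a j powr (p - 1) * b j) powr p \<le> (\<Sum>j\<in>J. a j powr p) powr (p - 1) * (\<Sum>j\<in>J. b j powr p)"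
proof -
  define K where "K = {j\<in>J. 0 < a j}"
  have finK: "finite K" using fin by (simp add: K_def)
  have lhs: "(\<Sum>j\<in>J. a j powr (p - 1) * b j) = (\<Sum>j\<in>K. a j powr (p - 1) * b j)"
    using fin a0 by (intro sum.mono_neutral_right) (auto simp: K_def less_le)
  have rhs: "(\<Sum>j\<in>J. a j powr p) = (\<Sum>j\<in>K. a j powr p)"
    using fin a0 by (intro sum.mono_neutral_right) (auto simp: K_def less_le)
  have bK: "(\<Sum>j\<in>K. b j powr p) \<le> (\<Sum>j\<in>J. b j powr p)"
    using fin by (intro sum_mono2) (auto simp: K_def)
  show ?thesis
  proof (cases "K = {}")
    case True
    then show ?thesis using lhs by (simp add: sum_nonneg)
  next
    case False
    have "(\<Sum>j\<in>K. a j powr (p - 1) * b j) powr p \<le> (\<Sum>j\<in>K. a j powr p) powr (p - 1) * (\<Sum>j\<in>K. b j powr p)"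
      by (rule holder_weighted_sum_pos[OF p finK False _ b0]) (simp add: K_def)
    also have "\<dots> \<le> (\<Sum>j\<in>K. a j powr p) powr (p - 1) * (\<Sum>j\<in>J. b j powr p)"
      using bK by (intro mult_left_mono) auto
    finally show ?thesis using lhs rhs by simp
  qed
qed

text \<open>Cancelling the factor S^((p-1)/p) in S a <= b S^((p-1)/p); this turns the row estimate
  into a lower bound for the embedding.\<close>
lemma powr_cancel_bound:
  fixes S a b p :: real
  assumes p: "0 < p" and S: "0 \<le> S" and a: "0 < a" and b: "0 \<le> b"
    and le: "S * a \<le> b * S powr ((p - 1) / p)"
  shows "S powr (1/p) \<le> b / a"
proof (cases "S = 0")
  case False
  then have Spos: "0 < S" using S by simp
  have split: "S = S powr (1/p) * S powr ((p - 1) / p)"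
    using Spos p by (simp add: powr_add[symmetric] add_divide_distrib[symmetric])
  have Q: "0 < S powr ((p - 1) / p)" using Spos by simp
  have "(S powr (1/p) * a) * S powr ((p - 1) / p) \<le> b * S powr ((p - 1) / p)"
    using le split by (simp only: mult_ac)
  then have "S powr (1/p) * a \<le> b" using Q by (rule mult_right_le_imp_le)
  then show ?thesis using a by (simp add: pos_le_divide_eq)
qed (use a b in simp)


section \<open>L^p functions and bounded operators on them\<close>

lemma Lp_zero: "(\<lambda>x. 0) \<in> Lp_set M p"
  by (simp add: Lp_set_def)

lemma Lp_norm_zero: "Lp_norm M p (\<lambda>x. 0) = 0"
  by (simp add: Lp_norm_def)

lemma Lp_norm_nonneg: "0 \<le> Lp_norm M p f"
  by (simp add: Lp_norm_def)

lemma Lp_add: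
  assumes "1 \<le> p" "f \<in> Lp_set M p" "g \<in> Lp_set M p"
  shows "(\<lambda>x. f x + g x) \<in> Lp_set M p"
proof -
  have m: "(\<lambda>x. f x + g x) \<in> borel_measurable M" using assms by (auto simp: Lp_set_def)
  have i: "integrable M (\<lambda>x. 2 powr p * (cmod (f x) powr p + cmod (g x) powr p))"
    using assms by (auto simp: Lp_set_def)
  show ?thesis unfolding Lp_set_def
  proof (intro CollectI conjI m)
    show "integrable M (\<lambda>x. cmod (f x + g x) powr p)"
      by (rule Bochner_Integration.integrable_bound[OF i]) (use m norm_add_powr_le[OF assms(1)] in auto)
  qed
qed

lemma Lp_scale:
  assumes "f \<in> Lp_set M p"
  shows "(\<lambda>x. c * f x) \<in> Lp_set M p"
  using assms by (auto simp: Lp_set_def norm_mult powr_mult)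

lemma Lp_norm_scale:
  assumes "1 \<le> p"
  shows "Lp_norm M p (\<lambda>x. c * f x) = cmod c * Lp_norm M p f"
proof -
  have "Lp_norm M p (\<lambda>x. c * f x) = (cmod c powr p * (\<integral>x. cmod (f x) powr p \<partial>M)) powr (1/p)"
    by (simp add: Lp_norm_def norm_mult powr_mult)
  also have "\<dots> = cmod c * Lp_norm M p f"
    using assms by (simp add: Lp_norm_def powr_mult powr_powr)
  finally show ?thesis .
qed

text \<open>A quasi-triangle inequality for the L^p norm (with constant 4); it is only used to see
  that sums of bounded operators are bounded.\<close>
lemma Lp_norm_add_le:
  assumes "1 \<le> p" "f \<in> Lp_set M p" "g \<in> Lp_set M p"
  shows "Lp_norm M p (\<lambda>x. f x + g x) \<le> 4 * (Lp_norm M p f + Lp_norm M p g)"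
proof -
  define If where "If = (\<integral>x. cmod (f x) powr p \<partial>M)"
  define Ig where "Ig = (\<integral>x. cmod (g x) powr p \<partial>M)"
  have If0: "0 \<le> If" and Ig0: "0 \<le> Ig" by (auto simp: If_def Ig_def)
  have i: "integrable M (\<lambda>x. 2 powr p * (cmod (f x) powr p + cmod (g x) powr p))"
    using assms by (auto simp: Lp_set_def)
  have "(\<integral>x. cmod (f x + g x) powr p \<partial>M) \<le> (\<integral>x. 2 powr p * (cmod (f x) powr p + cmod (g x) powr p) \<partial>M)"
    using Lp_add[OF assms] i norm_add_powr_le[OF assms(1)] by (intro integral_mono) (auto simp: Lp_set_def)
  also have "\<dots> = 2 powr p * (If + Ig)"
    using assms by (simp add: If_def Ig_def Lp_set_def)
  also have "\<dots> \<le> 2 powr p * (2 * max If Ig)"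
    using If0 Ig0 by (intro mult_left_mono) auto
  also have "2 \<le> (2::real) powr p"
    using assms powr_mono[of 1 p 2] by simp
  hence "2 powr p * (2 * max If Ig) \<le> 2 powr p * (2 powr p * max If Ig)"
    using If0 Ig0 by (intro mult_left_mono mult_right_mono) auto
  also have "\<dots> = 4 powr p * max If Ig"
    by (simp add: powr_mult[symmetric])
  finally have le: "(\<integral>x. cmod (f x + g x) powr p \<partial>M) \<le> 4 powr p * max If Ig" .
  have "Lp_norm M p (\<lambda>x. f x + g x) \<le> (4 powr p * max If Ig) powr (1/p)"
    unfolding Lp_norm_def using assms le by (intro powr_mono2) auto
  also have "\<dots> = 4 * max If Ig powr (1/p)"
    using assms If0 Ig0 by (simp add: powr_mult powr_powr)
  also have "max If Ig powr (1/p) = max (Lp_norm M p f) (Lp_norm M p g)"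
    unfolding Lp_norm_def If_def[symmetric] Ig_def[symmetric]
    using max_powr[of If Ig "1/p"] If0 Ig0 assms by simp
  also have "4 * max (Lp_norm M p f) (Lp_norm M p g) \<le> 4 * (Lp_norm M p f + Lp_norm M p g)"
    using Lp_norm_nonneg[of M p f] Lp_norm_nonneg[of M p g] by auto
  finally show ?thesis .
qed

lemma Lp_sum:
  fixes n :: nat
  assumes p: "1 \<le> p" and f: "\<And>i. i < n \<Longrightarrow> f i \<in> Lp_set M p"
  shows "(\<lambda>x. \<Sum>i<n. c i * f i x) \<in> Lp_set M p"
  using f
proof (induction n)
  case 0 then show ?case by (simp add: Lp_zero)
next
  case (Suc n)
  have "(\<lambda>x. (\<Sum>i<n. c i * f i x) + c n * f n x) \<in> Lp_set M p"
    by (intro Lp_add p Lp_scale Suc) auto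
  then show ?case by simp
qed

lemma Lp_indicator:
  assumes p: "0 < p" and X: "X \<in> sets M" "emeasure M X \<noteq> \<infinity>"
  shows "(\<lambda>x. indicator X x :: complex) \<in> Lp_set M p"
proof -
  have "(\<lambda>x. cmod (indicator X x :: complex) powr p) = indicator X"
    using p by (auto simp: indicator_def)
  then show ?thesis using X by (simp add: Lp_set_def integrable_indicator_iff less_top)
qed

text \<open>All norm
  computations are done on this quantity, where integrals of nonnegative functions can be
  added and compared freely; the L^p norm is its (1/p)-th power.\<close>
definition Lp_mass :: "'a measure \<Rightarrow> real \<Rightarrow> ('a \<Rightarrow> complex) \<Rightarrow> ennreal" where
  "Lp_mass M p u = (\<integral>\<^sup>+ y. ennreal (cmod (u y) powr p) \<partial>M)"

lemma Lp_norm_mass: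
  assumes u: "u \<in> Lp_set M p"
  shows "Lp_norm M p u = enn2real (Lp_mass M p u) powr (1/p)" and "Lp_mass M p u \<noteq> \<infinity>"
proof -
  have i: "integrable M (\<lambda>x. cmod (u x) powr p)" using u by (simp add: Lp_set_def)
  have m: "(\<lambda>x. cmod (u x) powr p) \<in> borel_measurable M" using i by (rule borel_measurable_integrable)
  show "Lp_norm M p u = enn2real (Lp_mass M p u) powr (1/p)"
    unfolding Lp_norm_def Lp_mass_def by (subst integral_eq_nn_integral[OF m]) auto
  have "Lp_mass M p u = ennreal (\<integral>x. cmod (u x) powr p \<partial>M)"
    unfolding Lp_mass_def by (rule nn_integral_eq_integral[OF i]) auto
  then show "Lp_mass M p u \<noteq> \<infinity>" by simp
qed

lemma Lp_norm_le_from_mass: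
  assumes p: "0 < p" and u: "u \<in> Lp_set M p" and f: "f \<in> Lp_set M p" and B: "0 \<le> B"
    and le: "Lp_mass M p u \<le> ennreal (B powr p) * Lp_mass M p f"
  shows "Lp_norm M p u \<le> B * Lp_norm M p f"
proof -
  have fin: "Lp_mass M p f \<noteq> \<infinity>" by (rule Lp_norm_mass(2)[OF f])
  have "enn2real (Lp_mass M p u) \<le> enn2real (ennreal (B powr p) * Lp_mass M p f)"
    using le fin by (intro enn2real_mono) (simp_all add: ennreal_mult_less_top top.not_eq_extremum)
  also have "\<dots> = B powr p * enn2real (Lp_mass M p f)" by (simp add: enn2real_mult)
  finally have le2: "enn2real (Lp_mass M p u) \<le> B powr p * enn2real (Lp_mass M p f)" .
  have "Lp_norm M p u = enn2real (Lp_mass M p u) powr (1/p)" by (rule Lp_norm_mass(1)[OF u])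
  also have "\<dots> \<le> (B powr p * enn2real (Lp_mass M p f)) powr (1/p)"
    using le2 p by (intro powr_mono2) auto
  also have "\<dots> = B * enn2real (Lp_mass M p f) powr (1/p)"
    using B p by (simp add: powr_mult powr_powr)
  also have "\<dots> = B * Lp_norm M p f" by (simp add: Lp_norm_mass(1)[OF f])
  finally show ?thesis .
qed

lemma mass_disjoint_sum:
  fixes n :: nat
  assumes p: "0 < p" and m: "\<And>k. k < n \<Longrightarrow> u k \<in> borel_measurable M"
    and d: "AE y in M. \<forall>k<n. \<forall>l<n. k \<noteq> l \<longrightarrow> u k y = 0 \<or> u l y = 0"
  shows "Lp_mass M p (\<lambda>y. \<Sum>k<n. c k * u k y) = (\<Sum>k<n. ennreal (cmod (c k) powr p) * Lp_mass M p (u k))"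
proof -
  have pw: "ennreal (cmod (\<Sum>k<n. c k * u k y) powr p) = (\<Sum>k<n. ennreal (cmod (c k) powr p) * ennreal (cmod (u k y) powr p))"
    if dy: "\<forall>k<n. \<forall>l<n. k \<noteq> l \<longrightarrow> u k y = 0 \<or> u l y = 0" for y
  proof (cases "\<exists>k0<n. u k0 y \<noteq> 0")
    case True
    then obtain k0 where k0: "k0 < n" "u k0 y \<noteq> 0" by blast
    have z: "k < n \<Longrightarrow> k \<noteq> k0 \<Longrightarrow> u k y = 0" for k using dy k0 by blast
    have "(\<Sum>k<n. c k * u k y) = (\<Sum>k<n. if k = k0 then c k * u k y else 0)"
      using z by (intro sum.cong) auto
    also have "\<dots> = c k0 * u k0 y" using k0 by simp
    finally have 1: "(\<Sum>k<n. c k * u k y) = c k0 * u k0 y" .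
    have "(\<Sum>k<n. ennreal (cmod (c k) powr p) * ennreal (cmod (u k y) powr p))
        = (\<Sum>k<n. if k = k0 then ennreal (cmod (c k) powr p) * ennreal (cmod (u k y) powr p) else 0)"
      using z p by (intro sum.cong) auto
    also have "\<dots> = ennreal (cmod (c k0) powr p) * ennreal (cmod (u k0 y) powr p)" using k0 by simp
    finally show ?thesis using 1 by (simp add: norm_mult powr_mult ennreal_mult)
  next
    case False
    then show ?thesis using p by simp
  qed
  have "Lp_mass M p (\<lambda>y. \<Sum>k<n. c k * u k y) = (\<integral>\<^sup>+ y. (\<Sum>k<n. ennreal (cmod (c k) powr p) * ennreal (cmod (u k y) powr p)) \<partial>M)"
    unfolding Lp_mass_def by (rule nn_integral_cong_AE) (use d pw in \<open>auto elim!: AE_mp\<close>)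
  also have "\<dots> = (\<Sum>k<n. \<integral>\<^sup>+ y. ennreal (cmod (c k) powr p) * ennreal (cmod (u k y) powr p) \<partial>M)"
    using m by (intro nn_integral_sum) auto
  also have "\<dots> = (\<Sum>k<n. ennreal (cmod (c k) powr p) * Lp_mass M p (u k))"
    unfolding Lp_mass_def using m by (intro sum.cong refl nn_integral_cmult) auto
  finally show ?thesis .
qed

lemma mass_weighted_sum_le:
  fixes n :: nat and a :: "nat \<Rightarrow> real"
  assumes p: "1 \<le> p" and m: "\<And>j. u j \<in> borel_measurable M"
    and a0: "\<And>j. 0 \<le> a j" and z: "\<And>j. cmod (z j) = a j powr (p - 1)"
  shows "Lp_mass M p (\<lambda>x. \<Sum>j<n. z j * u j x)
    \<le> ennreal ((\<Sum>j<n. a j powr p) powr (p - 1)) * (\<Sum>j<n. Lp_mass M p (u j))"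
proof -
  define A where "A = (\<Sum>j<n. a j powr p)"
  have "Lp_mass M p (\<lambda>x. \<Sum>j<n. z j * u j x) \<le> (\<integral>\<^sup>+ x. ennreal (A powr (p - 1) * (\<Sum>j<n. cmod (u j x) powr p)) \<partial>M)"
    unfolding Lp_mass_def
  proof (intro nn_integral_mono ennreal_leI)
    fix x
    have "cmod (\<Sum>j<n. z j * u j x) \<le> (\<Sum>j<n. cmod (z j * u j x))" by (rule norm_sum)
    also have "\<dots> = (\<Sum>j<n. a j powr (p - 1) * cmod (u j x))" by (simp add: norm_mult z)
    finally have "cmod (\<Sum>j<n. z j * u j x) powr p \<le> (\<Sum>j<n. a j powr (p - 1) * cmod (u j x)) powr p"
      using p by (intro powr_mono2) auto
    also have "\<dots> \<le> A powr (p - 1) * (\<Sum>j<n. cmod (u j x) powr p)"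
      unfolding A_def by (rule holder_weighted_sum[OF p]) (auto simp: a0)
    finally show "cmod (\<Sum>j<n. z j * u j x) powr p \<le> A powr (p - 1) * (\<Sum>j<n. cmod (u j x) powr p)" .
  qed
  also have "\<dots> = (\<integral>\<^sup>+ x. ennreal (A powr (p - 1)) * (\<Sum>j<n. ennreal (cmod (u j x) powr p)) \<partial>M)"
    by (intro nn_integral_cong) (simp add: ennreal_mult sum_nonneg)
  also have "\<dots> = ennreal (A powr (p - 1)) * (\<integral>\<^sup>+ x. (\<Sum>j<n. ennreal (cmod (u j x) powr p)) \<partial>M)"
    using m by (intro nn_integral_cmult) measurable
  also have "(\<integral>\<^sup>+ x. (\<Sum>j<n. ennreal (cmod (u j x) powr p)) \<partial>M) = (\<Sum>j<n. Lp_mass M p (u j))"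
    unfolding Lp_mass_def using m by (intro nn_integral_sum) auto
  finally show ?thesis by (simp add: A_def)
qed

lemma nn_integral_indicator_le: "(\<integral>\<^sup>+ x. indicator A x * ennreal (u x) \<partial>M) \<le> (\<integral>\<^sup>+ x. ennreal (u x) \<partial>M)"
  by (intro nn_integral_mono) (auto simp: indicator_def)

lemma lp_opD:
  assumes "lp_op M p T"
  shows "\<And>f. f \<in> Lp_set M p \<Longrightarrow> T f \<in> Lp_set M p"
    and "\<And>f g. f \<in> Lp_set M p \<Longrightarrow> g \<in> Lp_set M p \<Longrightarrow> (AE x in M. f x = g x) \<Longrightarrow> (AE x in M. T f x = T g x)"
    and "\<And>f g c. f \<in> Lp_set M p \<Longrightarrow> g \<in> Lp_set M p \<Longrightarrow> AE x in M. T (\<lambda>y. c * f y + g y) x = c * T f x + T g x"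
  using assms unfolding lp_op_def by blast+

lemma lp_op_bound:
  assumes "lp_op M p T"
  obtains C where "0 \<le> C" "\<And>f. f \<in> Lp_set M p \<Longrightarrow> Lp_norm M p (T f) \<le> C * Lp_norm M p f"
proof -
  obtain C where C: "\<forall>f\<in>Lp_set M p. Lp_norm M p (T f) \<le> C * Lp_norm M p f"
    using assms unfolding lp_op_def by blast
  show ?thesis
  proof (rule that[of "max C 0"])
    fix f assume "f \<in> Lp_set M p"
    then have "Lp_norm M p (T f) \<le> C * Lp_norm M p f" using C by blast
    also have "\<dots> \<le> max C 0 * Lp_norm M p f"
      by (intro mult_right_mono) (auto simp: Lp_norm_nonneg)
    finally show "Lp_norm M p (T f) \<le> max C 0 * Lp_norm M p f" .
  qed simp
qed

lemma lp_opI: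
  assumes "\<And>f. f \<in> Lp_set M p \<Longrightarrow> T f \<in> Lp_set M p"
    and "\<And>f g. f \<in> Lp_set M p \<Longrightarrow> g \<in> Lp_set M p \<Longrightarrow> (AE x in M. f x = g x) \<Longrightarrow> (AE x in M. T f x = T g x)"
    and "\<And>f g c. f \<in> Lp_set M p \<Longrightarrow> g \<in> Lp_set M p \<Longrightarrow> AE x in M. T (\<lambda>y. c * f y + g y) x = c * T f x + T g x"
    and "\<And>f. f \<in> Lp_set M p \<Longrightarrow> Lp_norm M p (T f) \<le> C * Lp_norm M p f"
  shows "lp_op M p T"
  using assms unfolding lp_op_def by blast

lemma lp_op_id: "lp_op M p id"
  by (rule lp_opI[where C=1]) auto

lemma lp_op_zero: "lp_op M p (\<lambda>f x. 0)"
  by (rule lp_opI[where C=0]) (auto simp: Lp_zero Lp_norm_zero)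

lemma lp_op_comp:
  assumes "1 \<le> p" "lp_op M p T" "lp_op M p U"
  shows "lp_op M p (T \<circ> U)"
proof -
  obtain C1 where C1: "0 \<le> C1" "\<And>f. f \<in> Lp_set M p \<Longrightarrow> Lp_norm M p (T f) \<le> C1 * Lp_norm M p f"
    using lp_op_bound[OF assms(2)] by blast
  obtain C2 where C2: "0 \<le> C2" "\<And>f. f \<in> Lp_set M p \<Longrightarrow> Lp_norm M p (U f) \<le> C2 * Lp_norm M p f"
    using lp_op_bound[OF assms(3)] by blast
  note T = lp_opD[OF assms(2)] and U = lp_opD[OF assms(3)]
  show ?thesis
  proof (rule lp_opI[where C="C1*C2"])
    fix f g c assume f: "f \<in> Lp_set M p" and g: "g \<in> Lp_set M p"
    have cf: "(\<lambda>y. c * f y + g y) \<in> Lp_set M p" by (intro Lp_add Lp_scale assms f g)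
    have cU: "(\<lambda>y. c * U f y + U g y) \<in> Lp_set M p" by (intro Lp_add Lp_scale assms U(1) f g)
    have "AE x in M. T (U (\<lambda>y. c * f y + g y)) x = T (\<lambda>y. c * U f y + U g y) x"
      by (rule T(2)[OF U(1)[OF cf] cU U(3)[OF f g]])
    moreover have "AE x in M. T (\<lambda>y. c * U f y + U g y) x = c * T (U f) x + T (U g) x"
      by (rule T(3)[OF U(1)[OF f] U(1)[OF g]])
    ultimately show "AE x in M. (T \<circ> U) (\<lambda>y. c * f y + g y) x = c * (T \<circ> U) f x + (T \<circ> U) g x"
      by eventually_elim simp
  next
    fix f assume f: "f \<in> Lp_set M p"
    have "Lp_norm M p (T (U f)) \<le> C1 * Lp_norm M p (U f)" by (rule C1(2)[OF U(1)[OF f]])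
    also have "\<dots> \<le> C1 * (C2 * Lp_norm M p f)" by (intro mult_left_mono C2(2) f C1(1))
    finally show "Lp_norm M p ((T \<circ> U) f) \<le> C1 * C2 * Lp_norm M p f" by (simp add: mult.assoc)
  next
    fix f g assume f: "f \<in> Lp_set M p" and g: "g \<in> Lp_set M p" and fg: "AE x in M. f x = g x"
    show "AE x in M. (T \<circ> U) f x = (T \<circ> U) g x"
      using T(2)[OF U(1)[OF f] U(1)[OF g] U(2)[OF f g fg]] by simp
  qed (auto intro: T U)
qed

lemma lp_op_add:
  assumes "1 \<le> p" "lp_op M p T" "lp_op M p U"
  shows "lp_op M p (\<lambda>f x. T f x + U f x)"
proof -
  obtain C1 where C1: "0 \<le> C1" "\<And>f. f \<in> Lp_set M p \<Longrightarrow> Lp_norm M p (T f) \<le> C1 * Lp_norm M p f"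
    using lp_op_bound[OF assms(2)] by blast
  obtain C2 where C2: "0 \<le> C2" "\<And>f. f \<in> Lp_set M p \<Longrightarrow> Lp_norm M p (U f) \<le> C2 * Lp_norm M p f"
    using lp_op_bound[OF assms(3)] by blast
  note T = lp_opD[OF assms(2)] and U = lp_opD[OF assms(3)]
  show ?thesis
  proof (rule lp_opI[where C="4*(C1+C2)"])
    fix f assume f: "f \<in> Lp_set M p"
    show "(\<lambda>x. T f x + U f x) \<in> Lp_set M p" by (intro Lp_add assms T(1) U(1) f)
    have "Lp_norm M p (\<lambda>x. T f x + U f x) \<le> 4 * (Lp_norm M p (T f) + Lp_norm M p (U f))"
      by (intro Lp_norm_add_le assms T(1) U(1) f)
    also have "\<dots> \<le> 4 * (C1 * Lp_norm M p f + C2 * Lp_norm M p f)"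
      using C1(2)[OF f] C2(2)[OF f] by simp
    finally show "Lp_norm M p (\<lambda>x. T f x + U f x) \<le> 4 * (C1 + C2) * Lp_norm M p f"
      by (simp add: algebra_simps)
  next
    fix f g assume f: "f \<in> Lp_set M p" and g: "g \<in> Lp_set M p" and fg: "AE x in M. f x = g x"
    show "AE x in M. T f x + U f x = T g x + U g x"
      using T(2)[OF f g fg] U(2)[OF f g fg] by eventually_elim auto
  next
    fix f g c assume f: "f \<in> Lp_set M p" and g: "g \<in> Lp_set M p"
    show "AE x in M. T (\<lambda>y. c * f y + g y) x + U (\<lambda>y. c * f y + g y) x = c * (T f x + U f x) + (T g x + U g x)"
      using T(3)[OF f g, of c] U(3)[OF f g, of c] by eventually_elim (simp add: algebra_simps)
  qed
qed

lemma lp_op_scale: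
  assumes "1 \<le> p" "lp_op M p T"
  shows "lp_op M p (\<lambda>f x. c * T f x)"
proof -
  obtain C1 where C1: "0 \<le> C1" "\<And>f. f \<in> Lp_set M p \<Longrightarrow> Lp_norm M p (T f) \<le> C1 * Lp_norm M p f"
    using lp_op_bound[OF assms(2)] by blast
  note T = lp_opD[OF assms(2)]
  show ?thesis
  proof (rule lp_opI[where C="cmod c * C1"])
    fix f assume f: "f \<in> Lp_set M p"
    show "(\<lambda>x. c * T f x) \<in> Lp_set M p" by (intro Lp_scale T(1) f)
    show "Lp_norm M p (\<lambda>x. c * T f x) \<le> cmod c * C1 * Lp_norm M p f"
      using C1(2)[OF f] by (simp add: Lp_norm_scale[OF assms(1)] mult.assoc mult_left_mono)
  next
    fix f g assume f: "f \<in> Lp_set M p" and g: "g \<in> Lp_set M p" and fg: "AE x in M. f x = g x"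
    show "AE x in M. c * T f x = c * T g x"
      using T(2)[OF f g fg] by eventually_elim auto
  next
    fix f g d assume f: "f \<in> Lp_set M p" and g: "g \<in> Lp_set M p"
    show "AE x in M. c * T (\<lambda>y. d * f y + g y) x = d * (c * T f x) + c * T g x"
      using T(3)[OF f g, of d] by eventually_elim (simp add: algebra_simps)
  qed
qed

lemma lp_op_sum:
  fixes n :: nat
  assumes "1 \<le> p" "\<And>i. i < n \<Longrightarrow> lp_op M p (W i)"
  shows "lp_op M p (\<lambda>f x. \<Sum>i<n. c i * W i f x)"
  using assms(2)
proof (induction n)
  case 0
  then show ?case using lp_op_zero by simp
next
  case (Suc n)
  have "lp_op M p (\<lambda>f x. (\<Sum>i<n. c i * W i f x) + c n * W n f x)"
    by (intro lp_op_add lp_op_scale assms(1) Suc) auto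
  then show ?case by simp
qed

lemma lp_op_word:
  fixes w :: "(bool \<times> nat) list"
  assumes "1 \<le> p" "\<And>j. lp_op M p (Sg j)" "\<And>j. lp_op M p (Tg j)"
  shows "lp_op M p (word_op Sg Tg w)"
proof (induction w)
  case Nil
  then show ?case using lp_op_id[of M p] by (simp add: word_op_def id_def)
next
  case (Cons a w)
  obtain b j where a: "a = (b, j)" by fastforce
  have "word_op Sg Tg (a # w) = (if b then Sg j else Tg j) \<circ> word_op Sg Tg w"
    by (simp add: word_op_def a)
  moreover have "lp_op M p ((if b then Sg j else Tg j) \<circ> word_op Sg Tg w)"
    using Cons assms by (intro lp_op_comp) auto
  ultimately show ?case by metis
qed

lemma lp_opnorm_le:
  assumes "0 \<le> B" "\<And>f. f \<in> Lp_set M p \<Longrightarrow> Lp_norm M p (T f) \<le> B * Lp_norm M p f"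
  shows "lp_opnorm M p T \<le> B"
  unfolding lp_opnorm_def
proof (rule cSup_least)
  show "{Lp_norm M p (T f) |f. f \<in> Lp_set M p \<and> Lp_norm M p f \<le> 1} \<noteq> {}"
    using Lp_zero[of M p] Lp_norm_zero[of M p] by auto
next
  fix x assume "x \<in> {Lp_norm M p (T f) |f. f \<in> Lp_set M p \<and> Lp_norm M p f \<le> 1}"
  then obtain f where f: "f \<in> Lp_set M p" "Lp_norm M p f \<le> 1" and x: "x = Lp_norm M p (T f)" by blast
  have "x \<le> B * Lp_norm M p f" using assms(2)[OF f(1)] x by simp
  also have "\<dots> \<le> B * 1" by (intro mult_left_mono f assms)
  finally show "x \<le> B" by simp
qed

lemma lp_op_sum_ae:
  fixes n :: nat
  assumes p: "1 \<le> p" and T: "lp_op M p T" and f: "\<And>i. i < n \<Longrightarrow> f i \<in> Lp_set M p"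
  shows "AE y in M. T (\<lambda>x. \<Sum>i<n. c i * f i x) y = (\<Sum>i<n. c i * T (f i) y)"
  using f
proof (induction n)
  case 0
  have "AE y in M. T (\<lambda>x. 1 * 0 + 0) y = 1 * T (\<lambda>x. 0) y + T (\<lambda>x. 0) y"
    by (rule lp_opD(3)[OF T Lp_zero Lp_zero])
  then show ?case by eventually_elim simp
next
  case (Suc n)
  have s: "(\<lambda>x. \<Sum>i<n. c i * f i x) \<in> Lp_set M p" using Suc by (intro Lp_sum p) auto
  have "AE y in M. T (\<lambda>x. c n * f n x + (\<Sum>i<n. c i * f i x)) y = c n * T (f n) y + T (\<lambda>x. \<Sum>i<n. c i * f i x) y"
    by (rule lp_opD(3)[OF T Suc.prems[of n] s]) simp
  moreover have "AE y in M. T (\<lambda>x. \<Sum>i<n. c i * f i x) y = (\<Sum>i<n. c i * T (f i) y)"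
    using Suc by auto
  ultimately show ?case by eventually_elim (simp add: add.commute)
qed

section \<open>The sequence space l^p\<close>

lemma lp_seq_zero: "0 < p \<Longrightarrow> (\<lambda>n. 0) \<in> lp_seq p"
  by (simp add: lp_seq_def)

lemma lp_seq_summable: "x \<in> lp_seq p \<Longrightarrow> summable (\<lambda>k. cmod (x k) powr p)"
  by (simp add: lp_seq_def)

lemma lp_seq_lin:
  assumes p: "1 \<le> p" and x: "x \<in> lp_seq p" and y: "y \<in> lp_seq p"
  shows "(\<lambda>n. c * x n + y n) \<in> lp_seq p"
  unfolding lp_seq_def mem_Collect_eq
proof (rule summable_comparison_test')
  show "summable (\<lambda>n. 2 powr p * (cmod c powr p * cmod (x n) powr p + cmod (y n) powr p))"
    using x y by (intro summable_mult summable_add) (auto simp: lp_seq_def)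
  show "norm (cmod (c * x n + y n) powr p) \<le> 2 powr p * (cmod c powr p * cmod (x n) powr p + cmod (y n) powr p)"
    for n using norm_add_powr_le[OF p, of "c * x n" "y n"] by (simp add: norm_mult powr_mult)
qed

lemma lp_seq_diff:
  assumes "1 \<le> p" "x \<in> lp_seq p" "y \<in> lp_seq p"
  shows "(\<lambda>n. x n - y n) \<in> lp_seq p"
  using lp_seq_lin[OF assms(1,3,2), of "-1"] by simp

lemma lp_seq_coord_le:
  assumes p: "0 < p" and x: "x \<in> lp_seq p"
  shows "cmod (x j) \<le> lp_seq_norm p x"
proof -
  have "cmod (x j) powr p = (\<Sum>n\<in>{j}. cmod (x n) powr p)" by simp
  also have "\<dots> \<le> (\<Sum>n. cmod (x n) powr p)"
    using x by (intro sum_le_suminf) (auto simp: lp_seq_def)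
  finally have "cmod (x j) powr p \<le> (\<Sum>n. cmod (x n) powr p)" .
  then have "(cmod (x j) powr p) powr (1/p) \<le> (\<Sum>n. cmod (x n) powr p) powr (1/p)"
    using p by (intro powr_mono2) auto
  then show ?thesis using p by (simp add: lp_seq_norm_def powr_powr)
qed

lemma lp_seq_partial_sums_bounded:
  assumes p: "0 < p" and B: "\<And>N. (\<Sum>j<N. cmod (x j) powr p) \<le> B"
  shows "x \<in> lp_seq p" and "lp_seq_norm p x \<le> B powr (1/p)"
proof -
  show x: "x \<in> lp_seq p"
    unfolding lp_seq_def mem_Collect_eq
    by (rule bounded_imp_summable[where B = B])
      (use B[of "Suc _"] in \<open>auto simp: lessThan_Suc_atMost\<close>)
  have "(\<Sum>j. cmod (x j) powr p) \<le> B"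
    using x by (intro suminf_le_const B) (auto simp: lp_seq_def)
  then show "lp_seq_norm p x \<le> B powr (1/p)"
    unfolding lp_seq_norm_def using p x by (intro powr_mono2 suminf_nonneg) (auto simp: lp_seq_def)
qed

text \<open>Completeness of l^p.  A sequence that is Cauchy in l^p converges coordinatewise, and the
  limit y is an l^p-limit: once the tail is \<open>\<epsilon>\<close>-Cauchy, all partial sums of
  \<open>|x\<^sub>n - y|\<^sup>p\<close> are bounded by \<open>\<epsilon>\<^sup>p\<close>.\<close>
lemma lp_seq_cauchy_coord:
  assumes p: "1 \<le> p" and xs: "\<And>n. xs n \<in> lp_seq p"
    and cauchy: "\<And>\<epsilon>. 0 < \<epsilon> \<Longrightarrow> \<exists>N. \<forall>m\<ge>N. \<forall>n\<ge>N. lp_seq_norm p (\<lambda>j. xs m j - xs n j) < \<epsilon>"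
  shows "Cauchy (\<lambda>n. xs n j)"
proof (rule metric_CauchyI)
  fix \<epsilon> :: real assume "0 < \<epsilon>"
  then obtain N where N: "\<forall>m\<ge>N. \<forall>n\<ge>N. lp_seq_norm p (\<lambda>j. xs m j - xs n j) < \<epsilon>"
    using cauchy by blast
  have "dist (xs m j) (xs n j) < \<epsilon>" if "N \<le> m" "N \<le> n" for m n
  proof -
    have "lp_seq_norm p (\<lambda>j. xs m j - xs n j) < \<epsilon>" using N that by simp
    moreover have "cmod (xs m j - xs n j) \<le> lp_seq_norm p (\<lambda>j. xs m j - xs n j)"
      using p by (intro lp_seq_coord_le lp_seq_diff xs) auto
    ultimately show ?thesis unfolding dist_norm by linarith
  qed
  then show "\<exists>N. \<forall>m\<ge>N. \<forall>n\<ge>N. dist (xs m j) (xs n j) < \<epsilon>" by blast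
qed

lemma lp_seq_tail_close:
  assumes p: "1 \<le> p" and xs: "\<And>n. xs n \<in> lp_seq p" and y_lim: "\<And>j. (\<lambda>n. xs n j) \<longlonglongrightarrow> y j"
    and N: "\<forall>m\<ge>N. \<forall>n\<ge>N. lp_seq_norm p (\<lambda>j. xs m j - xs n j) < \<epsilon>" and n: "N \<le> n" and e: "0 < \<epsilon>"
  shows "(\<lambda>j. xs n j - y j) \<in> lp_seq p" and "lp_seq_norm p (\<lambda>j. xs n j - y j) \<le> \<epsilon>"
proof -
  have p0: "0 < p" using p by simp
  have partial: "(\<Sum>j<K. cmod (xs n j - y j) powr p) \<le> \<epsilon> powr p" for K
  proof (rule LIMSEQ_le_const2)
    show "(\<lambda>m. \<Sum>j<K. cmod (xs n j - xs m j) powr p) \<longlonglongrightarrow> (\<Sum>j<K. cmod (xs n j - y j) powr p)"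
      using p0 by (intro tendsto_sum tendsto_powr' tendsto_norm tendsto_diff tendsto_const y_lim) auto
    show "\<exists>N'. \<forall>m\<ge>N'. (\<Sum>j<K. cmod (xs n j - xs m j) powr p) \<le> \<epsilon> powr p"
    proof (intro exI allI impI)
      fix m assume "N \<le> m"
      define d where "d = (\<lambda>j. xs n j - xs m j)"
      have d: "d \<in> lp_seq p" unfolding d_def by (rule lp_seq_diff[OF p xs xs])
      have "(\<Sum>j<K. cmod (d j) powr p) \<le> (\<Sum>j. cmod (d j) powr p)"
        using d by (intro sum_le_suminf) (auto simp: lp_seq_def)
      also have "\<dots> = lp_seq_norm p d powr p"
        using p0 d by (simp add: lp_seq_norm_def powr_powr suminf_nonneg lp_seq_def)
      also have "\<dots> \<le> \<epsilon> powr p"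
      proof (rule powr_mono2)
        show "lp_seq_norm p d \<le> \<epsilon>" using N n \<open>N \<le> m\<close> by (simp add: d_def less_imp_le)
      qed (use p0 in \<open>auto simp: lp_seq_norm_def\<close>)
      finally show "(\<Sum>j<K. cmod (xs n j - xs m j) powr p) \<le> \<epsilon> powr p" by (simp add: d_def)
    qed
  qed
  show "(\<lambda>j. xs n j - y j) \<in> lp_seq p" "lp_seq_norm p (\<lambda>j. xs n j - y j) \<le> \<epsilon>"
    using lp_seq_partial_sums_bounded[OF p0 partial] p0 e by (simp_all add: powr_powr)
qed

lemma lp_seq_complete:
  assumes p: "1 \<le> p" and xs: "\<And>n. xs n \<in> lp_seq p"
    and cauchy: "\<And>\<epsilon>. 0 < \<epsilon> \<Longrightarrow> \<exists>N. \<forall>m\<ge>N. \<forall>n\<ge>N. lp_seq_norm p (\<lambda>j. xs m j - xs n j) < \<epsilon>"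
  obtains y where "y \<in> lp_seq p" and "(\<lambda>n. lp_seq_norm p (\<lambda>j. xs n j - y j)) \<longlonglongrightarrow> 0"
proof -
  have "\<forall>j. \<exists>c. (\<lambda>n. xs n j) \<longlonglongrightarrow> c"
    using lp_seq_cauchy_coord[OF p xs cauchy] by (simp add: Cauchy_convergent_iff convergent_def)
  then obtain y where y_lim: "\<And>j. (\<lambda>n. xs n j) \<longlonglongrightarrow> y j"
    by (metis choice)
  note close = lp_seq_tail_close[OF p xs y_lim]
  obtain N0 where "\<forall>m\<ge>N0. \<forall>n\<ge>N0. lp_seq_norm p (\<lambda>j. xs m j - xs n j) < 1"
    using cauchy[of 1] by auto
  then have "(\<lambda>j. xs N0 j - y j) \<in> lp_seq p" using close(1)[of N0 1 N0] by simp
  from lp_seq_diff[OF p xs[of N0] this] have y: "y \<in> lp_seq p" by simp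
  have "(\<lambda>n. lp_seq_norm p (\<lambda>j. xs n j - y j)) \<longlonglongrightarrow> 0"
  proof (rule LIMSEQ_I)
    fix r :: real assume r: "0 < r"
    then obtain N where "\<forall>m\<ge>N. \<forall>n\<ge>N. lp_seq_norm p (\<lambda>j. xs m j - xs n j) < r / 2"
      using cauchy[of "r / 2"] by auto
    then have "lp_seq_norm p (\<lambda>j. xs n j - y j) \<le> r / 2" if "N \<le> n" for n
      using close(2)[OF _ that, of "r / 2"] r by simp
    moreover have "0 \<le> lp_seq_norm p x" for x by (simp add: lp_seq_norm_def)
    ultimately show "\<exists>N. \<forall>n\<ge>N. norm (lp_seq_norm p (\<lambda>j. xs n j - y j) - 0) < r"
      using r by (intro exI[of _ N] allI impI) fastforce
  qed
  with y show ?thesis by (rule that)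
qed

section \<open>Measurable set transformations\<close>

lemma ae_seteq_AE:
  assumes "ae_seteq M A B"
  shows "AE x in M. (x \<in> A \<longleftrightarrow> x \<in> B)"
proof -
  have "AE x in M. x \<notin> (A - B) \<union> (B - A)"
    using assms unfolding ae_seteq_def by (rule AE_not_in)
  then show ?thesis by eventually_elim auto
qed

lemma ae_seteq_sym: "ae_seteq M A B \<Longrightarrow> ae_seteq M B A"
  by (simp add: ae_seteq_def Un_commute)

lemma null_ae_seteq: "A \<in> null_sets M \<Longrightarrow> ae_seteq M A {}"
  by (simp add: ae_seteq_def)

lemma ae_seteq_null:
  assumes "ae_seteq M A B" "B \<in> null_sets M" "A \<in> sets M"
  shows "A \<in> null_sets M"
proof -
  have 1: "(A - B) \<union> (B - A) \<union> B \<in> null_sets M" using assms unfolding ae_seteq_def by auto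
  have 2: "A \<subseteq> (A - B) \<union> (B - A) \<union> B" by blast
  show ?thesis by (rule null_sets_subset[OF 1 assms(3) 2])
qed

lemma mst_sets: "mst M E F S \<Longrightarrow> A \<in> sets M \<Longrightarrow> A \<subseteq> E \<Longrightarrow> S A \<in> sets M \<and> S A \<subseteq> F"
  unfolding mst_def by simp

lemma mst_cong: "mst M E F S \<Longrightarrow> A \<in> sets M \<Longrightarrow> A \<subseteq> E \<Longrightarrow> B \<in> sets M \<Longrightarrow> B \<subseteq> E \<Longrightarrow> ae_seteq M A B \<Longrightarrow> ae_seteq M (S A) (S B)"
  unfolding mst_def by simp

lemma mst_E: "mst M E F S \<Longrightarrow> ae_seteq M (S E) F"
  unfolding mst_def by simp

lemma mst_compl: "mst M E F S \<Longrightarrow> A \<in> sets M \<Longrightarrow> A \<subseteq> E \<Longrightarrow> ae_seteq M (S (E - A)) (F - S A)"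
  unfolding mst_def by simp

lemma mst_Union:
  fixes As :: "nat \<Rightarrow> _"
  assumes "mst M E F S" "\<And>n. As n \<in> sets M \<and> As n \<subseteq> E"
  shows "ae_seteq M (S (\<Union>n. As n)) (\<Union>n. S (As n))"
proof -
  have h: "\<forall>As::nat \<Rightarrow> _. (\<forall>n. As n \<in> sets M \<and> As n \<subseteq> E) \<longrightarrow> ae_seteq M (S (\<Union>n. As n)) (\<Union>n. S (As n))"
    using assms(1) unfolding mst_def by (elim conjE) assumption
  show ?thesis by (rule mp[OF spec[OF h, of As]]) (use assms(2) in blast)
qed

context
  fixes M E F S
  assumes mst0: "mst M E F S" and E: "E \<in> sets M" and F: "F \<in> sets M"
begin

lemmas mst_sets' = mst_sets[OF mst0]
lemmas mst_compl' = mst_compl[OF mst0]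
lemmas mst_Union' = mst_Union[OF mst0]
lemmas mst_E' = mst_E[OF mst0]

lemma mst_empty: "S {} \<in> null_sets M"
proof -
  have "ae_seteq M (S (E - E)) (F - S E)" using mst_compl'[of E] E by simp
  moreover have "F - S E \<in> null_sets M"
  proof -
    have 1: "(S E - F) \<union> (F - S E) \<in> null_sets M" using mst_E' unfolding ae_seteq_def .
    have 2: "F - S E \<in> sets M" using mst_sets'[of E] E F by auto
    show ?thesis by (rule null_sets_subset[OF 1 2]) blast
  qed
  ultimately show ?thesis using mst_sets'[of "{}"] ae_seteq_null[of M "S {}" "F - S E"] by simp
qed

lemma mst_mono:
  assumes X: "X \<in> sets M" "X \<subseteq> B" and B: "B \<in> sets M" "B \<subseteq> E"
  shows "S X - S B \<in> null_sets M"
proof -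
  define As where "As = (\<lambda>n::nat. if n = 0 then X else B - X)"
  have As: "\<And>n. As n \<in> sets M \<and> As n \<subseteq> E" using X B by (auto simp: As_def)
  have U: "(\<Union>n. As n) = B" using X by (auto simp: As_def)
  have "ae_seteq M (S B) (\<Union>n. S (As n))" using mst_Union'[of As] As U by simp
  then have "(\<Union>n. S (As n)) - S B \<in> null_sets M"
  proof -
    assume h: "ae_seteq M (S B) (\<Union>n. S (As n))"
    have 1: "(\<Union>n. S (As n)) \<in> sets M" using As mst_sets' by blast
    have 2: "S B \<in> sets M" using mst_sets' B by blast
    have 3: "(S B - (\<Union>n. S (As n))) \<union> ((\<Union>n. S (As n)) - S B) \<in> null_sets M"
      using h unfolding ae_seteq_def .
    show ?thesis by (rule null_sets_subset[OF 3]) (use 1 2 in auto)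
  qed
  moreover have "S X \<subseteq> (\<Union>n. S (As n))" by (auto simp: As_def)
  moreover have "S X - S B \<in> sets M" using mst_sets' X B by auto
  ultimately show ?thesis by (meson Diff_mono order_refl null_sets_subset)
qed

lemma mst_disj:
  assumes A: "A \<in> sets M" "A \<subseteq> E" and B: "B \<in> sets M" "B \<subseteq> E" and d: "A \<inter> B = {}"
  shows "S A \<inter> S B \<in> null_sets M"
proof -
  have n1: "S B - S (E - A) \<in> null_sets M" using mst_mono[of B "E - A"] A B d E by auto
  have n2: "(S (E - A) - (F - S A)) \<union> ((F - S A) - S (E - A)) \<in> null_sets M"
    using mst_compl'[OF A] unfolding ae_seteq_def .
  have 1: "S A \<inter> S B \<subseteq> (S B - S (E - A)) \<union> ((S (E - A) - (F - S A)) \<union> ((F - S A) - S (E - A)))" by blast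
  have 2: "S A \<inter> S B \<in> sets M" using mst_sets' A B by auto
  show ?thesis by (rule null_sets_subset[OF _ 2 1]) (use n1 n2 in auto)
qed

lemma mst_disjoint_images:
  assumes fin: "finite V" and L: "\<And>v. L v \<in> sets M" "\<And>v. L v \<subseteq> E"
    and disj: "\<And>v w. v \<noteq> w \<Longrightarrow> L v \<inter> L w = {}"
  shows "AE y in M. \<forall>v\<in>V. \<forall>w\<in>V. v \<noteq> w \<longrightarrow> \<not> (y \<in> S (L v) \<and> y \<in> S (L w))"
proof (intro AE_finite_allI fin)
  fix v w
  show "AE y in M. v \<noteq> w \<longrightarrow> \<not> (y \<in> S (L v) \<and> y \<in> S (L w))"
  proof (cases "v = w")
    case False
    have "S (L v) \<inter> S (L w) \<in> null_sets M" by (rule mst_disj[OF L L disj[OF False]])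
    from AE_not_in[OF this] show ?thesis by eventually_elim auto
  qed simp
qed

end

lemma mst_bij_surj:
  assumes "mst_bij M A B T" "C \<in> sets M" "C \<subseteq> B"
  shows "\<exists>X. X \<in> sets M \<and> X \<subseteq> A \<and> ae_seteq M (T X) C"
proof -
  have "\<forall>C. C \<in> sets M \<and> C \<subseteq> B \<longrightarrow> (\<exists>X. X \<in> sets M \<and> X \<subseteq> A \<and> ae_seteq M (T X) C)"
    using assms(1) unfolding mst_bij_def by (elim conjE)
  then show ?thesis using assms(2,3) by blast
qed

section \<open>The induced map on measurable functions\<close>

lemma induced_map_measurable:
  fixes Tf :: "'a lpop"
  assumes "induced_map M E F S Tf" "\<xi> \<in> borel_measurable M"
  shows "Tf \<xi> \<in> borel_measurable M"
proof -
  have h: "\<forall>\<xi>\<in>borel_measurable M. Tf \<xi> \<in> borel_measurable M"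
    using assms(1) unfolding induced_map_def by (elim conjE) assumption
  show ?thesis using h assms(2) by blast
qed

lemma induced_map_ae_cong:
  fixes Tf :: "'a lpop"
  assumes "induced_map M E F S Tf" "\<xi> \<in> borel_measurable M" "\<eta> \<in> borel_measurable M"
    "AE x in M. x \<in> E \<longrightarrow> \<xi> x = \<eta> x"
  shows "AE y in M. y \<in> F \<longrightarrow> Tf \<xi> y = Tf \<eta> y"
proof -
  have h: "\<forall>\<xi>\<in>borel_measurable M. \<forall>\<eta>\<in>borel_measurable M.
        (AE x in M. x \<in> E \<longrightarrow> \<xi> x = \<eta> x) \<longrightarrow> (AE y in M. y \<in> F \<longrightarrow> Tf \<xi> y = Tf \<eta> y)"
    using assms(1) unfolding induced_map_def by (elim conjE) assumption
  show ?thesis using h assms(2-4) by blast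
qed

lemma induced_map_linear:
  fixes Tf :: "'a lpop"
  assumes "induced_map M E F S Tf" "\<xi> \<in> borel_measurable M" "\<eta> \<in> borel_measurable M"
  shows "AE y in M. y \<in> F \<longrightarrow> Tf (\<lambda>x. c * \<xi> x + \<eta> x) y = c * Tf \<xi> y + Tf \<eta> y"
proof -
  have h: "\<forall>\<xi>\<in>borel_measurable M. \<forall>\<eta>\<in>borel_measurable M. \<forall>c::complex.
        AE y in M. y \<in> F \<longrightarrow> Tf (\<lambda>x. c * \<xi> x + \<eta> x) y = c * Tf \<xi> y + Tf \<eta> y"
    using assms(1) unfolding induced_map_def by (elim conjE) assumption
  show ?thesis using h assms(2-3) by blast
qed

lemma induced_map_indicator:
  fixes Tf :: "'a lpop"
  assumes "induced_map M E F S Tf" "A \<in> sets M" "A \<subseteq> E"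
  shows "AE y in M. y \<in> F \<longrightarrow> Tf (indicator A) y = indicator (S A) y"
proof -
  have h: "\<forall>A. A \<in> sets M \<and> A \<subseteq> E \<longrightarrow>
        (AE y in M. y \<in> F \<longrightarrow> Tf (indicator A) y = indicator (S A) y)"
    using assms(1) unfolding induced_map_def by (elim conjE) assumption
  show ?thesis using h assms(2-3) by blast
qed

lemma induced_map_limit:
  fixes Tf :: "'a lpop" and \<xi>s :: "nat \<Rightarrow> 'a \<Rightarrow> complex"
  assumes "induced_map M E F S Tf" "\<And>n. \<xi>s n \<in> borel_measurable M" "\<xi> \<in> borel_measurable M"
    "AE x in M. x \<in> E \<longrightarrow> (\<lambda>n. \<xi>s n x) \<longlonglongrightarrow> \<xi> x"
  shows "AE y in M. y \<in> F \<longrightarrow> (\<lambda>n. Tf (\<xi>s n) y) \<longlonglongrightarrow> Tf \<xi> y"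
proof -
  have h: "\<forall>(\<xi>s::nat \<Rightarrow> 'a \<Rightarrow> complex) \<xi>. (\<forall>n. \<xi>s n \<in> borel_measurable M) \<and> \<xi> \<in> borel_measurable M \<and>
        (AE x in M. x \<in> E \<longrightarrow> (\<lambda>n. \<xi>s n x) \<longlonglongrightarrow> \<xi> x)
        \<longrightarrow> (AE y in M. y \<in> F \<longrightarrow> (\<lambda>n. Tf (\<xi>s n) y) \<longlonglongrightarrow> Tf \<xi> y)"
    using assms(1) unfolding induced_map_def by (elim conjE) assumption
  show ?thesis by (rule mp[OF spec[OF spec[OF h, of \<xi>s], of \<xi>]]) (use assms(2-4) in blast)
qed

lemma induced_map_zero:
  fixes Tf :: "'a lpop"
  assumes "induced_map M E F S Tf"
  shows "AE y in M. y \<in> F \<longrightarrow> Tf (\<lambda>x. 0) y = 0"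
  using induced_map_linear[OF assms, of "\<lambda>x. 0" "\<lambda>x. 0" 1] by simp

lemma induced_map_sum:
  fixes Tf :: "'a lpop" and \<xi> :: "'i \<Rightarrow> 'a \<Rightarrow> complex"
  assumes im: "induced_map M E F S Tf" and fin: "finite I" and m: "\<And>i. i \<in> I \<Longrightarrow> \<xi> i \<in> borel_measurable M"
  shows "AE y in M. y \<in> F \<longrightarrow> Tf (\<lambda>x. \<Sum>i\<in>I. c i * \<xi> i x) y = (\<Sum>i\<in>I. c i * Tf (\<xi> i) y)"
  using fin m
proof (induction I rule: finite_induct)
  case empty
  then show ?case using induced_map_zero[OF im] by simp
next
  case (insert i I)
  have mI: "(\<lambda>x. \<Sum>i\<in>I. c i * \<xi> i x) \<in> borel_measurable M" using insert by auto
  have "AE y in M. y \<in> F \<longrightarrow> Tf (\<lambda>x. c i * \<xi> i x + (\<Sum>i\<in>I. c i * \<xi> i x)) y =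
      c i * Tf (\<xi> i) y + Tf (\<lambda>x. \<Sum>i\<in>I. c i * \<xi> i x) y"
    by (rule induced_map_linear[OF im insert(4)[of i] mI]) simp
  then show ?case using insert by (auto elim!: AE_mp)
qed

lemma induced_map_cong:
  fixes Tf :: "'a lpop"
  assumes "induced_map M E F S Tf" "\<xi> \<in> borel_measurable M" "\<eta> \<in> borel_measurable M"
    "\<And>x. x \<in> E \<Longrightarrow> \<xi> x = \<eta> x"
  shows "AE y in M. y \<in> F \<longrightarrow> Tf \<xi> y = Tf \<eta> y"
  by (rule induced_map_ae_cong[OF assms(1-3)]) (use assms(4) in auto)

lemma induced_map_step:
  fixes Tf :: "'a lpop" and L :: "'v \<Rightarrow> 'a set" and k :: "'v \<Rightarrow> complex"
  assumes im: "induced_map M E F S Tf" and fin: "finite V"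
    and L: "\<And>v. v \<in> V \<Longrightarrow> L v \<in> sets M" "\<And>v. v \<in> V \<Longrightarrow> L v \<subseteq> E"
  shows "AE y in M. y \<in> F \<longrightarrow> Tf (\<lambda>x. \<Sum>v\<in>V. k v * indicator (L v) x) y = (\<Sum>v\<in>V. k v * indicator (S (L v)) y)"
proof -
  have 1: "AE y in M. y \<in> F \<longrightarrow> Tf (\<lambda>x. \<Sum>v\<in>V. k v * indicator (L v) x) y = (\<Sum>v\<in>V. k v * Tf (indicator (L v)) y)"
    by (rule induced_map_sum[OF im fin]) (use L in auto)
  have 2: "AE y in M. \<forall>v\<in>V. y \<in> F \<longrightarrow> Tf (indicator (L v)) y = indicator (S (L v)) y"
    by (rule AE_finite_allI[OF fin]) (rule induced_map_indicator[OF im L])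
  show ?thesis using 1 2 by eventually_elim auto
qed

lemma level_set_sum:
  fixes \<xi> :: "'a \<Rightarrow> 'b" and G :: "'b \<Rightarrow> 'c::semiring_1"
  assumes "x \<in> E" "E \<subseteq> space M" "finite (\<xi> ` space M)"
  shows "(\<Sum>v\<in>\<xi> ` space M. G v * indicator (\<xi> -` {v} \<inter> E) x) = G (\<xi> x)"
proof -
  have "(\<Sum>v\<in>\<xi> ` space M. G v * indicator (\<xi> -` {v} \<inter> E) x) = (\<Sum>v\<in>\<xi> ` space M. if v = \<xi> x then G v else 0)"
    using assms(1) by (intro sum.cong) (auto simp: indicator_def)
  also have "\<dots> = G (\<xi> x)" using assms by (auto simp: sum.delta')
  finally show ?thesis .
qed

lemma simple_level_set_sets:
  assumes E: "E \<in> sets M" and sf: "simple_function M \<xi>"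
  shows "\<xi> -` {v} \<inter> E \<in> sets M"
proof -
  have "\<xi> -` {v} \<inter> E = (\<xi> -` {v} \<inter> space M) \<inter> E" using sets.sets_into_space[OF E] by auto
  then show ?thesis using simple_functionD(2)[OF sf] E by auto
qed

lemma induced_map_simple:
  fixes Tf :: "'a lpop" and \<xi> :: "'a \<Rightarrow> 'b" and G :: "'b \<Rightarrow> complex"
  assumes im: "induced_map M E F S Tf" and E: "E \<in> sets M" and sf: "simple_function M \<xi>"
  shows "AE y in M. y \<in> F \<longrightarrow>
    Tf (\<lambda>x. G (\<xi> x)) y = (\<Sum>v\<in>\<xi> ` space M. G v * indicator (S (\<xi> -` {v} \<inter> E)) y)"
proof -
  define V where "V = \<xi> ` space M"
  define L where "L = (\<lambda>v. \<xi> -` {v} \<inter> E)"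
  have fin: "finite V" using sf by (simp add: V_def simple_functionD)
  have Es: "E \<subseteq> space M" using E by (rule sets.sets_into_space)
  have Ls: "L v \<in> sets M" for v unfolding L_def by (rule simple_level_set_sets[OF E sf])
  have LE: "L v \<subseteq> E" for v by (auto simp: L_def)
  have mG: "(\<lambda>x. G (\<xi> x)) \<in> borel_measurable M"
    using simple_function_compose[OF sf, of G] by (auto simp: comp_def intro: borel_measurable_simple_function)
  have ms: "(\<lambda>x. \<Sum>v\<in>V. G v * indicator (L v) x) \<in> borel_measurable M"
    using Ls by (intro borel_measurable_sum borel_measurable_times) auto
  have "AE y in M. y \<in> F \<longrightarrow> Tf (\<lambda>x. G (\<xi> x)) y = Tf (\<lambda>x. \<Sum>v\<in>V. G v * indicator (L v) x) y"
    by (rule induced_map_cong[OF im mG ms]) (use level_set_sum[OF _ Es, of _ \<xi> G] fin in \<open>auto simp: V_def L_def\<close>)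
  moreover have "AE y in M. y \<in> F \<longrightarrow> Tf (\<lambda>x. \<Sum>v\<in>V. G v * indicator (L v) x) y = (\<Sum>v\<in>V. G v * indicator (S (L v)) y)"
    by (rule induced_map_step[OF im fin Ls LE])
  ultimately show ?thesis by eventually_elim (simp add: V_def L_def)
qed

lemma sum_disj_eval:
  fixes A :: "'v \<Rightarrow> 'a set" and k :: "'v \<Rightarrow> complex" and G :: "complex \<Rightarrow> complex"
  assumes fin: "finite V" and G0: "G 0 = 0"
    and d: "\<forall>v\<in>V. \<forall>w\<in>V. v \<noteq> w \<longrightarrow> \<not> (y \<in> A v \<and> y \<in> A w)"
  shows "G (\<Sum>v\<in>V. k v * indicator (A v) y) = (\<Sum>v\<in>V. G (k v) * indicator (A v) y)"
proof (cases "\<exists>v0\<in>V. y \<in> A v0")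
  case True
  then obtain v0 where v0: "v0 \<in> V" "y \<in> A v0" by blast
  have i: "\<And>v. v \<in> V \<Longrightarrow> indicator (A v) y = (if v = v0 then 1 else (0::complex))"
    using d v0 by (auto simp: indicator_def)
  have "(\<Sum>v\<in>V. k v * indicator (A v) y) = (\<Sum>v\<in>V. if v = v0 then k v else 0)"
    using i by (intro sum.cong) auto
  also have "\<dots> = k v0" using fin v0 by (simp add: sum.delta')
  finally have 1: "(\<Sum>v\<in>V. k v * indicator (A v) y) = k v0" .
  have "(\<Sum>v\<in>V. G (k v) * indicator (A v) y) = (\<Sum>v\<in>V. if v = v0 then G (k v) else 0)"
    using i by (intro sum.cong) auto
  also have "\<dots> = G (k v0)" using fin v0 by (simp add: sum.delta')
  finally show ?thesis using 1 by simp
next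
  case False
  then show ?thesis using G0 by (auto simp: indicator_def)
qed

text \<open>\<open>S\<^sub>*\<close> commutes with every continuous G vanishing at 0: first for simple functions,
  where \<open>S\<^sub>*\<close> acts on level sets, then by pointwise approximation.\<close>
lemma induced_map_comp_simple:
  fixes Tf :: "'a lpop" and \<xi> :: "'a \<Rightarrow> complex" and G :: "complex \<Rightarrow> complex"
  assumes im: "induced_map M E F S Tf" and mst: "mst M E F S" and E: "E \<in> sets M" and F: "F \<in> sets M"
    and G0: "G 0 = 0" and sf: "simple_function M \<xi>"
  shows "AE y in M. y \<in> F \<longrightarrow> Tf (\<lambda>x. G (\<xi> x)) y = G (Tf \<xi> y)"
proof -
  define V where "V = \<xi> ` space M"
  define L where "L = (\<lambda>v. \<xi> -` {v} \<inter> E)"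
  have fin: "finite V" using sf by (simp add: V_def simple_functionD)
  have Ls: "L v \<in> sets M" for v unfolding L_def by (rule simple_level_set_sets[OF E sf])
  have LE: "L v \<subseteq> E" for v by (auto simp: L_def)
  have G_step: "AE y in M. y \<in> F \<longrightarrow> Tf (\<lambda>x. G (\<xi> x)) y = (\<Sum>v\<in>V. G v * indicator (S (L v)) y)"
    using induced_map_simple[OF im E sf, of G] by (simp add: V_def L_def)
  have id_step: "AE y in M. y \<in> F \<longrightarrow> Tf \<xi> y = (\<Sum>v\<in>V. v * indicator (S (L v)) y)"
    using induced_map_simple[OF im E sf, of "\<lambda>v. v"] by (simp add: V_def L_def)
  have disj: "AE y in M. \<forall>v\<in>V. \<forall>w\<in>V. v \<noteq> w \<longrightarrow> \<not> (y \<in> S (L v) \<and> y \<in> S (L w))"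
    by (rule mst_disjoint_images[OF mst E F fin Ls LE]) (auto simp: L_def)
  show ?thesis using G_step id_step disj
  proof eventually_elim
    case (elim y)
    then show ?case using sum_disj_eval[of V G y "\<lambda>v. S (L v)" "\<lambda>v. v", OF fin G0] by simp
  qed
qed

lemma induced_map_comp:
  fixes Tf :: "'a lpop" and \<xi> :: "'a \<Rightarrow> complex" and G :: "complex \<Rightarrow> complex"
  assumes im: "induced_map M E F S Tf" and mst: "mst M E F S" and E: "E \<in> sets M" and F: "F \<in> sets M"
    and G: "continuous_on UNIV G" and G0: "G 0 = 0" and m\<xi>: "\<xi> \<in> borel_measurable M"
  shows "AE y in M. y \<in> F \<longrightarrow> Tf (\<lambda>x. G (\<xi> x)) y = G (Tf \<xi> y)"
proof -
  obtain Fs where sf: "\<And>i. simple_function M (Fs i)" and conv: "\<And>x. x \<in> space M \<Longrightarrow> (\<lambda>i. Fs i x) \<longlonglongrightarrow> \<xi> x"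
    using borel_measurable_implies_sequence_metric[OF m\<xi>, of 0] by blast
  have Es: "E \<subseteq> space M" using E by (rule sets.sets_into_space)
  have mF: "\<And>i. Fs i \<in> borel_measurable M" using sf by (rule borel_measurable_simple_function)
  have cG: "isCont G z" for z using G by (simp add: continuous_on_eq_continuous_at)
  have simple_case: "AE y in M. \<forall>i. y \<in> F \<longrightarrow> Tf (\<lambda>x. G (Fs i x)) y = G (Tf (Fs i) y)"
    unfolding AE_all_countable by (intro allI induced_map_comp_simple[where G=G, OF im mst E F G0 sf])
  have lim_Tf: "AE y in M. y \<in> F \<longrightarrow> (\<lambda>i. Tf (Fs i) y) \<longlonglongrightarrow> Tf \<xi> y"
    by (rule induced_map_limit[OF im mF m\<xi>]) (use conv Es in auto)
  have lim_TG: "AE y in M. y \<in> F \<longrightarrow> (\<lambda>i. Tf (\<lambda>x. G (Fs i x)) y) \<longlonglongrightarrow> Tf (\<lambda>x. G (\<xi> x)) y"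
  proof (rule induced_map_limit[OF im])
    show "\<And>i. (\<lambda>x. G (Fs i x)) \<in> borel_measurable M" by (rule borel_measurable_continuous_on[OF G mF])
    show "(\<lambda>x. G (\<xi> x)) \<in> borel_measurable M" by (rule borel_measurable_continuous_on[OF G m\<xi>])
    show "AE x in M. x \<in> E \<longrightarrow> (\<lambda>i. G (Fs i x)) \<longlonglongrightarrow> G (\<xi> x)"
      using conv Es by (intro AE_I2 impI isCont_tendsto_compose[OF cG]) auto
  qed
  show ?thesis using simple_case lim_Tf lim_TG
  proof eventually_elim
    case (elim y)
    show ?case
    proof
      assume y: "y \<in> F"
      have "(\<lambda>i. Tf (\<lambda>x. G (Fs i x)) y) \<longlonglongrightarrow> G (Tf \<xi> y)"
        using elim y isCont_tendsto_compose[OF cG] by simp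
      then show "Tf (\<lambda>x. G (\<xi> x)) y = G (Tf \<xi> y)" using elim(3) y LIMSEQ_unique by blast
    qed
  qed
qed

lemma induced_map_nonneg:
  fixes Tf :: "'a lpop" and \<psi> :: "'a \<Rightarrow> real"
  assumes im: "induced_map M E F S Tf" and mst: "mst M E F S" and E: "E \<in> sets M" and F: "F \<in> sets M"
    and m: "\<psi> \<in> borel_measurable M" and nn: "\<And>x. 0 \<le> \<psi> x"
  shows "AE y in M. y \<in> F \<longrightarrow> Tf (\<lambda>x. of_real (\<psi> x)) y = of_real (cmod (Tf (\<lambda>x. of_real (\<psi> x)) y))"
proof -
  have c: "continuous_on UNIV (\<lambda>z::complex. complex_of_real (cmod z))"
    by (intro continuous_intros)
  have "AE y in M. y \<in> F \<longrightarrow> Tf (\<lambda>x. of_real (cmod (of_real (\<psi> x)))) y = of_real (cmod (Tf (\<lambda>x. of_real (\<psi> x)) y))"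
    by (rule induced_map_comp[OF im mst E F c]) (use m in auto)
  moreover have "(\<lambda>x. complex_of_real (cmod (complex_of_real (\<psi> x)))) = (\<lambda>x. of_real (\<psi> x))"
    using nn by auto
  ultimately show ?thesis by simp
qed

lemma induced_map_mono_nonneg:
  fixes Tf :: "'a lpop" and \<psi> \<psi>' :: "'a \<Rightarrow> real"
  assumes im: "induced_map M E F S Tf" and mst: "mst M E F S" and E: "E \<in> sets M" and F: "F \<in> sets M"
    and m: "\<psi> \<in> borel_measurable M" "\<psi>' \<in> borel_measurable M"
    and nn: "\<And>x. 0 \<le> \<psi> x" and le: "\<And>x. \<psi> x \<le> \<psi>' x"
  shows "AE y in M. y \<in> F \<longrightarrow> cmod (Tf (\<lambda>x. of_real (\<psi> x)) y) \<le> cmod (Tf (\<lambda>x. of_real (\<psi>' x)) y)"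
proof -
  define d where "d = (\<lambda>x. \<psi>' x - \<psi> x)"
  have md: "d \<in> borel_measurable M" using m by (simp add: d_def)
  have nd: "0 \<le> d x" for x using le by (simp add: d_def)
  have split: "(\<lambda>x. complex_of_real (\<psi>' x)) = (\<lambda>x. 1 * complex_of_real (d x) + complex_of_real (\<psi> x))"
    by (auto simp: d_def)
  have add: "AE y in M. y \<in> F \<longrightarrow> Tf (\<lambda>x. 1 * complex_of_real (d x) + complex_of_real (\<psi> x)) y =
      1 * Tf (\<lambda>x. complex_of_real (d x)) y + Tf (\<lambda>x. complex_of_real (\<psi> x)) y"
    by (rule induced_map_linear[OF im]) (use md m in auto)
  have pos_d: "AE y in M. y \<in> F \<longrightarrow> Tf (\<lambda>x. of_real (d x)) y = of_real (cmod (Tf (\<lambda>x. of_real (d x)) y))"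
    by (rule induced_map_nonneg[OF im mst E F md nd])
  have pos_\<psi>: "AE y in M. y \<in> F \<longrightarrow> Tf (\<lambda>x. of_real (\<psi> x)) y = of_real (cmod (Tf (\<lambda>x. of_real (\<psi> x)) y))"
    by (rule induced_map_nonneg[OF im mst E F m(1) nn])
  show ?thesis using add pos_d pos_\<psi>
  proof eventually_elim
    case (elim y)
    show ?case
    proof
      assume y: "y \<in> F"
      define a where "a = cmod (Tf (\<lambda>x. complex_of_real (d x)) y)"
      define b where "b = cmod (Tf (\<lambda>x. complex_of_real (\<psi> x)) y)"
      have "Tf (\<lambda>x. complex_of_real (\<psi>' x)) y = of_real (a + b)"
        using elim y unfolding split a_def b_def by simp
      moreover have "0 \<le> a" "0 \<le> b" by (simp_all add: a_def b_def)
      ultimately have "cmod (Tf (\<lambda>x. complex_of_real (\<psi>' x)) y) = a + b"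
        by (simp del: of_real_add)
      with \<open>0 \<le> a\<close> show "cmod (Tf (\<lambda>x. of_real (\<psi> x)) y) \<le> cmod (Tf (\<lambda>x. of_real (\<psi>' x)) y)"
        by (simp add: b_def)
    qed
  qed
qed

lemma nn_integral_LIMSEQ_AE:
  fixes f :: "nat \<Rightarrow> 'a \<Rightarrow> ennreal"
  assumes mono: "\<And>i. AE x in M. f i x \<le> f (Suc i) x" and m: "\<And>i. f i \<in> borel_measurable M"
    and conv: "AE x in M. (\<lambda>i. f i x) \<longlonglongrightarrow> u x"
  shows "(\<lambda>i. integral\<^sup>N M (f i)) \<longlonglongrightarrow> integral\<^sup>N M u"
proof -
  have allmono: "AE x in M. \<forall>i. f i x \<le> f (Suc i) x" using mono by (simp add: AE_all_countable)
  have "integral\<^sup>N M u = (\<integral>\<^sup>+ x. (SUP i. f i x) \<partial>M)"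
  proof (rule nn_integral_cong_AE)
    show "AE x in M. u x = (SUP i. f i x)" using allmono conv
    proof eventually_elim
      case (elim x)
      have "incseq (\<lambda>i. f i x)" using elim(1) by (intro incseq_SucI) auto
      then have "(\<lambda>i. f i x) \<longlonglongrightarrow> (SUP i. f i x)" by (rule LIMSEQ_SUP)
      then show ?case using elim(2) LIMSEQ_unique by blast
    qed
  qed
  also have "\<dots> = (SUP i. integral\<^sup>N M (f i))"
    by (rule nn_integral_monotone_convergence_SUP_AE) (use mono m in auto)
  finally have eq: "integral\<^sup>N M u = (SUP i. integral\<^sup>N M (f i))" .
  have "incseq (\<lambda>i. integral\<^sup>N M (f i))"
    by (intro incseq_SucI nn_integral_mono_AE mono)
  then show ?thesis unfolding eq by (rule LIMSEQ_SUP)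
qed

lemma nonneg_step_integrand:
  fixes V :: "real set" and A :: "real \<Rightarrow> 'a set" and h :: real
  assumes V0: "\<And>v. v \<in> V \<Longrightarrow> 0 \<le> v" and h0: "0 \<le> h" and AF: "\<And>v. A v \<subseteq> F"
  shows "indicator F y * ennreal (h * cmod (\<Sum>v\<in>V. complex_of_real v * indicator (A v) y))
      = (\<Sum>v\<in>V. ennreal v * (ennreal h * indicator (A v) y))"
proof -
  have "complex_of_real (\<Sum>v\<in>V. v * indicator (A v) y) = (\<Sum>v\<in>V. complex_of_real (v * indicator (A v) y))"
    by (rule of_real_sum)
  also have "\<dots> = (\<Sum>v\<in>V. complex_of_real v * indicator (A v) y)"
    by (intro sum.cong refl) (auto simp: indicator_def)
  finally have "(\<Sum>v\<in>V. complex_of_real v * indicator (A v) y) = complex_of_real (\<Sum>v\<in>V. v * indicator (A v) y)"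
    by simp
  moreover have "0 \<le> (\<Sum>v\<in>V. v * indicator (A v) y)" using V0 by (intro sum_nonneg) auto
  ultimately have cm: "cmod (\<Sum>v\<in>V. complex_of_real v * indicator (A v) y) = (\<Sum>v\<in>V. v * indicator (A v) y)"
    by (metis abs_of_nonneg norm_of_real)
  have "indicator F y * ennreal (h * cmod (\<Sum>v\<in>V. complex_of_real v * indicator (A v) y))
      = ennreal (\<Sum>v\<in>V. v * (h * indicator (A v) y))"
  proof (cases "y \<in> F")
    case False
    then have "\<And>v. y \<notin> A v" using AF by blast
    then show ?thesis using False by simp
  qed (auto simp: cm sum_distrib_left mult.commute mult.left_commute)
  also have "\<dots> = (\<Sum>v\<in>V. ennreal (v * (h * indicator (A v) y)))"
    using V0 h0 by (intro sum_ennreal[symmetric]) auto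
  also have "\<dots> = (\<Sum>v\<in>V. ennreal v * (ennreal h * indicator (A v) y))"
    using V0 h0 by (intro sum.cong refl) (auto simp: ennreal_mult indicator_def)
  finally show ?thesis .
qed

lemma nn_integral_simple_levels:
  fixes \<psi> :: "'a \<Rightarrow> real"
  assumes E: "E \<in> sets M" and sf: "simple_function M \<psi>"
  shows "(\<integral>\<^sup>+ x. indicator E x * ennreal (\<psi> x) \<partial>M) = (\<Sum>v\<in>\<psi> ` space M. ennreal v * emeasure M (\<psi> -` {v} \<inter> E))"
proof -
  define V where "V = \<psi> ` space M"
  define L where "L = (\<lambda>v. \<psi> -` {v} \<inter> E)"
  have fin: "finite V" using sf by (simp add: V_def simple_functionD)
  have Es: "E \<subseteq> space M" using E by (rule sets.sets_into_space)
  have Ls: "L v \<in> sets M" for v unfolding L_def by (rule simple_level_set_sets[OF E sf])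
  have "(\<integral>\<^sup>+ x. indicator E x * ennreal (\<psi> x) \<partial>M) = (\<integral>\<^sup>+ x. (\<Sum>v\<in>V. ennreal v * indicator (L v) x) \<partial>M)"
  proof (rule nn_integral_cong)
    fix x assume "x \<in> space M"
    show "indicator E x * ennreal (\<psi> x) = (\<Sum>v\<in>V. ennreal v * indicator (L v) x)"
    proof (cases "x \<in> E")
      case True
      then show ?thesis using level_set_sum[OF True Es, of \<psi> "\<lambda>v. ennreal v"] fin
        by (simp add: V_def L_def)
    qed (auto simp: L_def indicator_def intro!: sum.neutral)
  qed
  also have "\<dots> = (\<Sum>v\<in>V. \<integral>\<^sup>+ x. ennreal v * indicator (L v) x \<partial>M)"
    using Ls by (intro nn_integral_sum) auto
  also have "\<dots> = (\<Sum>v\<in>V. ennreal v * emeasure M (L v))"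
    using Ls by (simp add: nn_integral_cmult_indicator)
  finally show ?thesis by (simp add: V_def L_def)
qed

text \<open>First for simple \<psi>, integrating level by level.\<close>
lemma induced_map_integral_simple:
  fixes Tf :: "'a lpop" and \<psi> :: "'a \<Rightarrow> real" and h :: "'a \<Rightarrow> real"
  assumes im: "induced_map M E F S Tf" and mst: "mst M E F S" and E: "E \<in> sets M"
    and hm: "h \<in> borel_measurable M" and h0: "\<And>y. 0 \<le> h y"
    and hS: "\<And>A. A \<in> sets M \<Longrightarrow> A \<subseteq> E \<Longrightarrow> (\<integral>\<^sup>+ y. ennreal (h y) * indicator (S A) y \<partial>M) = emeasure M A"
    and sf: "simple_function M \<psi>" and nn: "\<And>x. 0 \<le> \<psi> x"
  shows "(\<integral>\<^sup>+ y. indicator F y * ennreal (h y * cmod (Tf (\<lambda>x. of_real (\<psi> x)) y)) \<partial>M) = (\<integral>\<^sup>+ x. indicator E x * ennreal (\<psi> x) \<partial>M)"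
proof -
  define V where "V = \<psi> ` space M"
  define L where "L = (\<lambda>v. \<psi> -` {v} \<inter> E)"
  have Ls: "L v \<in> sets M" for v unfolding L_def by (rule simple_level_set_sets[OF E sf])
  have LE: "L v \<subseteq> E" for v by (auto simp: L_def)
  have SLF: "S (L v) \<subseteq> F" and SLs: "S (L v) \<in> sets M" for v using mst_sets[OF mst Ls LE] by auto
  have V0: "v \<in> V \<Longrightarrow> 0 \<le> v" for v using nn by (auto simp: V_def)
  have mh: "(\<lambda>y. ennreal (h y) * indicator (S (L v)) y) \<in> borel_measurable M" for v
    using SLs hm by (intro borel_measurable_times_ennreal borel_measurable_indicator measurable_compose[OF hm measurable_ennreal]) auto
  have step: "AE y in M. y \<in> F \<longrightarrow> Tf (\<lambda>x. of_real (\<psi> x)) y = (\<Sum>v\<in>V. complex_of_real v * indicator (S (L v)) y)"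
    using induced_map_simple[OF im E sf, of complex_of_real] by (simp add: V_def L_def)
  have "(\<integral>\<^sup>+ y. indicator F y * ennreal (h y * cmod (Tf (\<lambda>x. of_real (\<psi> x)) y)) \<partial>M)
      = (\<integral>\<^sup>+ y. (\<Sum>v\<in>V. ennreal v * (ennreal (h y) * indicator (S (L v)) y)) \<partial>M)"
  proof (rule nn_integral_cong_AE)
    show "AE y in M. indicator F y * ennreal (h y * cmod (Tf (\<lambda>x. of_real (\<psi> x)) y)) = (\<Sum>v\<in>V. ennreal v * (ennreal (h y) * indicator (S (L v)) y))"
      using step
    proof eventually_elim
      case (elim y)
      have "indicator F y * ennreal (h y * cmod (Tf (\<lambda>x. of_real (\<psi> x)) y))
          = indicator F y * ennreal (h y * cmod (\<Sum>v\<in>V. complex_of_real v * indicator (S (L v)) y))"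
        using elim by (cases "y \<in> F") auto
      also have "\<dots> = (\<Sum>v\<in>V. ennreal v * (ennreal (h y) * indicator (S (L v)) y))"
        by (rule nonneg_step_integrand[OF V0 h0 SLF])
      finally show ?case .
    qed
  qed
  also have "\<dots> = (\<Sum>v\<in>V. \<integral>\<^sup>+ y. ennreal v * (ennreal (h y) * indicator (S (L v)) y) \<partial>M)"
    using mh by (intro nn_integral_sum) auto
  also have "\<dots> = (\<Sum>v\<in>V. ennreal v * emeasure M (L v))"
    using nn_integral_cmult[OF mh] hS[OF Ls LE] by simp
  also have "\<dots> = (\<integral>\<^sup>+ x. indicator E x * ennreal (\<psi> x) \<partial>M)"
    unfolding V_def L_def by (rule nn_integral_simple_levels[OF E sf, symmetric])
  finally show ?thesis .
qed

lemma simple_nonneg_approx: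
  fixes \<psi> :: "'a \<Rightarrow> real"
  assumes m: "\<psi> \<in> borel_measurable M" and nn: "\<And>x. 0 \<le> \<psi> x"
  obtains ps where "\<And>i. simple_function M (ps i)" "\<And>i x. 0 \<le> ps i x"
    "\<And>i x. ps i x \<le> ps (Suc i) x" "\<And>x. (\<lambda>i. ennreal (ps i x)) \<longlonglongrightarrow> ennreal (\<psi> x)"
    "\<And>x. (\<lambda>i. ps i x) \<longlonglongrightarrow> \<psi> x"
proof -
  have mu: "(\<lambda>x. ennreal (\<psi> x)) \<in> borel_measurable M" using m by simp
  obtain f where sf: "\<And>i. simple_function M (f i)" and inc: "incseq f" and fin: "\<And>i x. f i x < top"
    and sup: "\<And>x. (SUP i. f i x) = ennreal (\<psi> x)"
    using borel_measurable_implies_simple_function_sequence'[OF mu] by blast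
  define ps where "ps = (\<lambda>i x. enn2real (f i x))"
  have sps: "simple_function M (ps i)" for i
  proof -
    have "ps i = enn2real \<circ> f i" by (auto simp: ps_def)
    then show ?thesis using sf by simp
  qed
  have nps: "0 \<le> ps i x" for i x by (simp add: ps_def)
  have eps: "ennreal (ps i x) = f i x" for i x using fin[of i x] by (simp add: ps_def)
  have incx: "incseq (\<lambda>i. f i x)" for x using inc by (auto simp: incseq_def le_fun_def)
  have mono: "ps i x \<le> ps (Suc i) x" for i x
    using incx[of x] fin[of "Suc i" x] unfolding ps_def
    by (intro enn2real_mono) (auto simp: incseq_def)
  have conve: "(\<lambda>i. ennreal (ps i x)) \<longlonglongrightarrow> ennreal (\<psi> x)" for x
    using LIMSEQ_SUP[OF incx[of x]] sup[of x] by (simp add: eps)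
  have conv: "(\<lambda>i. ps i x) \<longlonglongrightarrow> \<psi> x" for x
    using conve[of x] nps nn by (subst (asm) tendsto_ennreal_iff) auto
  show ?thesis by (rule that[OF sps nps mono conve conv])
qed

lemma induced_map_integral:
  fixes Tf :: "'a lpop" and \<psi> :: "'a \<Rightarrow> real" and h :: "'a \<Rightarrow> real"
  assumes im: "induced_map M E F S Tf" and mst: "mst M E F S" and E: "E \<in> sets M" and F: "F \<in> sets M"
    and hm: "h \<in> borel_measurable M" and h0: "\<And>y. 0 \<le> h y"
    and hS: "\<And>A. A \<in> sets M \<Longrightarrow> A \<subseteq> E \<Longrightarrow> (\<integral>\<^sup>+ y. ennreal (h y) * indicator (S A) y \<partial>M) = emeasure M A"
    and m\<psi>: "\<psi> \<in> borel_measurable M" and nn: "\<And>x. 0 \<le> \<psi> x"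
  shows "(\<integral>\<^sup>+ y. indicator F y * ennreal (h y * cmod (Tf (\<lambda>x. of_real (\<psi> x)) y)) \<partial>M) = (\<integral>\<^sup>+ x. indicator E x * ennreal (\<psi> x) \<partial>M)"
proof -
  obtain ps where sps: "\<And>i. simple_function M (ps i)" and nps: "\<And>i x. 0 \<le> ps i x"
    and mono: "\<And>i x. ps i x \<le> ps (Suc i) x" and conve: "\<And>x. (\<lambda>i. ennreal (ps i x)) \<longlonglongrightarrow> ennreal (\<psi> x)"
    and conv: "\<And>x. (\<lambda>i. ps i x) \<longlonglongrightarrow> \<psi> x"
    using simple_nonneg_approx[OF m\<psi> nn] by blast
  have mps: "ps i \<in> borel_measurable M" for i using sps by (rule borel_measurable_simple_function)
  define lhs where "lhs = (\<lambda>\<xi>. \<integral>\<^sup>+ y. indicator F y * ennreal (h y * cmod (Tf \<xi> y)) \<partial>M)"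
  have m_integrand: "(\<lambda>y. indicator F y * ennreal (h y * cmod (Tf \<xi> y))) \<in> borel_measurable M"
    if "\<xi> \<in> borel_measurable M" for \<xi>
  proof -
    have [measurable]: "Tf \<xi> \<in> borel_measurable M" by (rule induced_map_measurable[OF im that])
    note [measurable] = hm F
    show ?thesis by measurable
  qed
  have rhs_lim: "(\<lambda>i. \<integral>\<^sup>+ x. indicator E x * ennreal (ps i x) \<partial>M) \<longlonglongrightarrow> (\<integral>\<^sup>+ x. indicator E x * ennreal (\<psi> x) \<partial>M)"
  proof (rule nn_integral_LIMSEQ)
    show "incseq (\<lambda>i x. indicator E x * ennreal (ps i x))"
      using mono by (intro incseq_SucI le_funI mult_left_mono ennreal_leI) auto
    show "\<And>i. (\<lambda>x. indicator E x * ennreal (ps i x)) \<in> borel_measurable M"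
      using mps E by measurable
    show "\<And>x. (\<lambda>i. indicator E x * ennreal (ps i x)) \<longlonglongrightarrow> indicator E x * ennreal (\<psi> x)"
      using conve by (auto simp: indicator_def)
  qed
  have lhs_lim: "(\<lambda>i. lhs (\<lambda>x. of_real (ps i x))) \<longlonglongrightarrow> lhs (\<lambda>x. of_real (\<psi> x))"
    unfolding lhs_def
  proof (rule nn_integral_LIMSEQ_AE)
    show "\<And>i. (\<lambda>y. indicator F y * ennreal (h y * cmod (Tf (\<lambda>x. of_real (ps i x)) y))) \<in> borel_measurable M"
      using mps by (intro m_integrand) auto
    show "AE y in M. indicator F y * ennreal (h y * cmod (Tf (\<lambda>x. of_real (ps i x)) y))
        \<le> indicator F y * ennreal (h y * cmod (Tf (\<lambda>x. of_real (ps (Suc i) x)) y))" for i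
      using induced_map_mono_nonneg[OF im mst E F mps mps nps mono, of i]
      by eventually_elim (auto simp: indicator_def intro!: ennreal_leI mult_left_mono h0)
    have "AE y in M. y \<in> F \<longrightarrow> (\<lambda>i. Tf (\<lambda>x. of_real (ps i x)) y) \<longlonglongrightarrow> Tf (\<lambda>x. of_real (\<psi> x)) y"
      by (rule induced_map_limit[OF im]) (use mps m\<psi> conv in \<open>auto intro!: AE_I2 tendsto_of_real\<close>)
    then show "AE y in M. (\<lambda>i. indicator F y * ennreal (h y * cmod (Tf (\<lambda>x. of_real (ps i x)) y)))
        \<longlonglongrightarrow> indicator F y * ennreal (h y * cmod (Tf (\<lambda>x. of_real (\<psi> x)) y))"
      by eventually_elim (auto simp: indicator_def intro!: tendsto_intros tendsto_ennrealI)
  qed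
  have "lhs (\<lambda>x. of_real (ps i x)) = (\<integral>\<^sup>+ x. indicator E x * ennreal (ps i x) \<partial>M)" for i
    unfolding lhs_def by (rule induced_map_integral_simple[OF im mst E hm h0 hS sps nps])
  with lhs_lim rhs_lim show ?thesis unfolding lhs_def by (simp add: LIMSEQ_unique)
qed

section \<open>Spatial partial isometries\<close>

lemma spatial_opD:
  fixes s Tf :: "'a lpop"
  assumes "spatial_op M p E F S g Tf s"
  obtains h where "E \<in> sets M" "F \<in> sets M" "mst_bij M E F S" "mst M E F S" "induced_map M E F S Tf"
    "g \<in> borel_measurable M" "AE y in M. y \<in> F \<longrightarrow> cmod (g y) = 1"
    "h \<in> borel_measurable M" "\<And>y. 0 \<le> h y"
    "\<And>A. A \<in> sets M \<Longrightarrow> A \<subseteq> E \<Longrightarrow> (\<integral>\<^sup>+ y. ennreal (h y) * indicator (S A) y \<partial>M) = emeasure M A"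
    "\<And>\<xi>. \<xi> \<in> Lp_set M p \<Longrightarrow> AE y in M. s \<xi> y = (if y \<in> F then g y * complex_of_real (h y powr (1 / p)) * Tf \<xi> y else 0)"
proof -
  from assms obtain h where "E \<in> sets M" "F \<in> sets M" "mst_bij M E F S" "induced_map M E F S Tf"
    "g \<in> borel_measurable M" "AE y in M. y \<in> F \<longrightarrow> cmod (g y) = 1"
    "h \<in> borel_measurable M" "\<forall>y. 0 \<le> h y"
    "\<forall>A. A \<in> sets M \<and> A \<subseteq> E \<longrightarrow> (\<integral>\<^sup>+ y. ennreal (h y) * indicator (S A) y \<partial>M) = emeasure M A"
    "\<forall>\<xi>\<in>Lp_set M p. AE y in M. s \<xi> y = (if y \<in> F then g y * complex_of_real (h y powr (1 / p)) * Tf \<xi> y else 0)"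
    unfolding spatial_op_def by blast
  moreover from this(3) have "mst M E F S" by (simp add: mst_bij_def)
  ultimately show ?thesis by (intro that[of h]) auto
qed

lemma spatial_op_support:
  fixes s Tf :: "'a lpop"
  assumes sp: "spatial_op M p E F S g Tf s" and \<xi>: "\<xi> \<in> Lp_set M p"
  shows "AE y in M. y \<notin> F \<longrightarrow> s \<xi> y = 0"
proof -
  obtain h where "E \<in> sets M" "F \<in> sets M" "mst_bij M E F S" "mst M E F S" "induced_map M E F S Tf"
    "g \<in> borel_measurable M" "AE y in M. y \<in> F \<longrightarrow> cmod (g y) = 1"
    "h \<in> borel_measurable M" "\<And>y. 0 \<le> h y"
    "\<And>A. A \<in> sets M \<Longrightarrow> A \<subseteq> E \<Longrightarrow> (\<integral>\<^sup>+ y. ennreal (h y) * indicator (S A) y \<partial>M) = emeasure M A"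
    and form: "\<And>\<xi>. \<xi> \<in> Lp_set M p \<Longrightarrow> AE y in M. s \<xi> y = (if y \<in> F then g y * complex_of_real (h y powr (1 / p)) * Tf \<xi> y else 0)"
    by (rule spatial_opD[OF sp], rule that)
  from form[OF \<xi>] show ?thesis by eventually_elim auto
qed

lemma spatial_op_mass:
  fixes s Tf :: "'a lpop"
  assumes sp: "spatial_op M p E F S g Tf s" and p: "0 < p" and \<xi>: "\<xi> \<in> Lp_set M p"
  shows "(\<integral>\<^sup>+ y. ennreal (cmod (s \<xi> y) powr p) \<partial>M) = (\<integral>\<^sup>+ x. indicator E x * ennreal (cmod (\<xi> x) powr p) \<partial>M)"
proof -
  obtain h where E: "E \<in> sets M" and F: "F \<in> sets M" and "mst_bij M E F S" and mst: "mst M E F S" and im: "induced_map M E F S Tf"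
    and "g \<in> borel_measurable M" and gm: "AE y in M. y \<in> F \<longrightarrow> cmod (g y) = 1"
    and hm: "h \<in> borel_measurable M" and h0: "\<And>y. 0 \<le> h y"
    and hS: "\<And>A. A \<in> sets M \<Longrightarrow> A \<subseteq> E \<Longrightarrow> (\<integral>\<^sup>+ y. ennreal (h y) * indicator (S A) y \<partial>M) = emeasure M A"
    and form: "\<And>\<xi>. \<xi> \<in> Lp_set M p \<Longrightarrow> AE y in M. s \<xi> y = (if y \<in> F then g y * complex_of_real (h y powr (1 / p)) * Tf \<xi> y else 0)"
    by (rule spatial_opD[OF sp], rule that)
  have m\<xi>: "\<xi> \<in> borel_measurable M" using \<xi> by (simp add: Lp_set_def)
  define \<psi> where "\<psi> = (\<lambda>x. cmod (\<xi> x) powr p)"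
  have m\<psi>: "\<psi> \<in> borel_measurable M" using m\<xi> by (simp add: \<psi>_def)
  have cG: "continuous_on UNIV (\<lambda>z::complex. complex_of_real (cmod z powr p))"
    using p by (intro continuous_on_of_real continuous_on_powr' continuous_intros) auto
  have G: "AE y in M. y \<in> F \<longrightarrow> Tf (\<lambda>x. complex_of_real (cmod (\<xi> x) powr p)) y = complex_of_real (cmod (Tf \<xi> y) powr p)"
    by (rule induced_map_comp[OF im mst E F cG]) (use p m\<xi> in auto)
  have "(\<integral>\<^sup>+ y. ennreal (cmod (s \<xi> y) powr p) \<partial>M) = (\<integral>\<^sup>+ y. indicator F y * ennreal (h y * cmod (Tf (\<lambda>x. of_real (\<psi> x)) y)) \<partial>M)"
  proof (rule nn_integral_cong_AE)
    show "AE y in M. ennreal (cmod (s \<xi> y) powr p) = indicator F y * ennreal (h y * cmod (Tf (\<lambda>x. of_real (\<psi> x)) y))"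
      using form[OF \<xi>] G gm
    proof eventually_elim
      case (elim y)
      show ?case
      proof (cases "y \<in> F")
        case True
        have "cmod (s \<xi> y) = h y powr (1/p) * cmod (Tf \<xi> y)"
          using elim True h0[of y] by (simp add: norm_mult)
        then have "cmod (s \<xi> y) powr p = (h y powr (1/p)) powr p * cmod (Tf \<xi> y) powr p"
          by (simp add: powr_mult)
        also have "\<dots> = h y * cmod (Tf \<xi> y) powr p"
          using p h0[of y] by (simp add: powr_powr powr_one)
        also have "cmod (Tf \<xi> y) powr p = cmod (Tf (\<lambda>x. of_real (\<psi> x)) y)"
          using elim True by (simp add: \<psi>_def)
        finally show ?thesis using True by simp
      next
        case False
        then show ?thesis using elim p by simp
      qed
    qed
  qed
  also have "\<dots> = (\<integral>\<^sup>+ x. indicator E x * ennreal (\<psi> x) \<partial>M)"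
    by (rule induced_map_integral[OF im mst E F hm h0 _ m\<psi>]) (use hS in \<open>auto simp: \<psi>_def\<close>)
  finally show ?thesis by (simp add: \<psi>_def)
qed

lemma (in sigma_finite_measure) null_if_finite_subsets_null:
  assumes B: "B \<in> sets M"
    and fin_null: "\<And>X. X \<in> sets M \<Longrightarrow> X \<subseteq> B \<Longrightarrow> emeasure M X \<noteq> \<infinity> \<Longrightarrow> emeasure M X = 0"
  shows "B \<in> null_sets M"
proof -
  obtain A :: "nat \<Rightarrow> 'a set" where As: "range A \<subseteq> sets M" and Aun: "(\<Union>i. A i) = space M"
    and Afin: "\<And>i. emeasure M (A i) \<noteq> \<infinity>"
    using sigma_finite by metis
  have "emeasure M (B \<inter> A n) = 0" for n
  proof (rule fin_null)
    have "emeasure M (B \<inter> A n) \<le> emeasure M (A n)" using As by (intro emeasure_mono) auto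
    then show "emeasure M (B \<inter> A n) \<noteq> \<infinity>" using Afin[of n] by (auto simp: top_unique)
  qed (use B As in auto)
  then have "(\<Union>n. B \<inter> A n) \<in> null_sets M"
    using B As by (intro null_sets_UN) (auto simp: null_sets_def)
  moreover have "B = (\<Union>n. B \<inter> A n)" using Aun B sets.sets_into_space by blast
  ultimately show ?thesis by simp
qed

section \<open>The generators of a spatial representation\<close>

lemma spatial_rep_data:
  assumes "spatial_rep M p Sg Tg"
  shows "\<exists>E F S g Tf S' Tf'. \<forall>j. spatial_op M p (E j) (F j) (S j) (g j) (Tf j) (Sg j) \<and>
     spatial_op M p (F j) (E j) (S' j) (\<lambda>x. inverse (Tf' j (g j) x)) (Tf' j) (Tg j)"
proof -
  have "\<forall>j. spatial_pair M p (Sg j) (Tg j)" using assms unfolding spatial_rep_def by (elim conjE)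
  then have "\<forall>j. \<exists>E F S g Tf S' Tf'. spatial_op M p E F S g Tf (Sg j) \<and>
     spatial_op M p F E S' (\<lambda>x. inverse (Tf' g x)) Tf' (Tg j)"
    unfolding spatial_pair_def by blast
  then show ?thesis by metis
qed

locale spatial_generators =
  fixes M :: "'a measure" and p :: real and Sg Tg :: "nat \<Rightarrow> 'a lpop"
    and E F :: "nat \<Rightarrow> 'a set" and S S' :: "nat \<Rightarrow> 'a set \<Rightarrow> 'a set" and g :: "nat \<Rightarrow> 'a \<Rightarrow> complex"
    and Tf Tf' :: "nat \<Rightarrow> 'a lpop"
  assumes p: "1 \<le> p" and sf: "sigma_finite_measure M" and rep: "spatial_rep M p Sg Tg"
    and spS: "\<And>j. spatial_op M p (E j) (F j) (S j) (g j) (Tf j) (Sg j)"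
    and spT: "\<And>j. spatial_op M p (F j) (E j) (S' j) (\<lambda>x. inverse (Tf' j (g j) x)) (Tf' j) (Tg j)"
begin

abbreviation mass :: "('a \<Rightarrow> complex) \<Rightarrow> ennreal" where
  "mass \<equiv> Lp_mass M p"

lemma p0: "0 < p" using p by simp

lemma lp_op_Sg: "lp_op M p (Sg j)" and lp_op_Tg: "lp_op M p (Tg j)"
  using rep unfolding spatial_rep_def by auto

lemma Lp_Sg: "f \<in> Lp_set M p \<Longrightarrow> Sg j f \<in> Lp_set M p" by (rule lp_opD(1)[OF lp_op_Sg])

lemma Lp_Tg: "f \<in> Lp_set M p \<Longrightarrow> Tg j f \<in> Lp_set M p" by (rule lp_opD(1)[OF lp_op_Tg])

lemma Lp_measurable: "f \<in> Lp_set M p \<Longrightarrow> f \<in> borel_measurable M" by (simp add: Lp_set_def)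

lemma Tg_Sg_ae: "f \<in> Lp_set M p \<Longrightarrow> AE x in M. Tg j (Sg j f) x = f x"
proof -
  have "\<forall>j. lp_opeq M p (Tg j \<circ> Sg j) id" using rep unfolding spatial_rep_def by (elim conjE)
  then show "f \<in> Lp_set M p \<Longrightarrow> AE x in M. Tg j (Sg j f) x = f x" unfolding lp_opeq_def by auto
qed

lemma Tg_Sg_other_ae: "j \<noteq> k \<Longrightarrow> f \<in> Lp_set M p \<Longrightarrow> AE x in M. Tg j (Sg k f) x = 0"
proof -
  have "\<forall>j k. j \<noteq> k \<longrightarrow> lp_opeq M p (Tg j \<circ> Sg k) (\<lambda>f x. 0)" using rep unfolding spatial_rep_def by (elim conjE)
  then show "j \<noteq> k \<Longrightarrow> f \<in> Lp_set M p \<Longrightarrow> AE x in M. Tg j (Sg k f) x = 0" unfolding lp_opeq_def by auto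
qed

lemma F_sets: "F j \<in> sets M"
  using spatial_opD[OF spS[of j]] by blast

lemma mass_Sg: "f \<in> Lp_set M p \<Longrightarrow> mass (Sg j f) = (\<integral>\<^sup>+ x. indicator (E j) x * ennreal (cmod (f x) powr p) \<partial>M)"
  unfolding Lp_mass_def by (rule spatial_op_mass[OF spS p0])

lemma mass_Tg: "f \<in> Lp_set M p \<Longrightarrow> mass (Tg j f) = (\<integral>\<^sup>+ x. indicator (F j) x * ennreal (cmod (f x) powr p) \<partial>M)"
  unfolding Lp_mass_def by (rule spatial_op_mass[OF spT p0])

lemma mass_Sg_le: "f \<in> Lp_set M p \<Longrightarrow> mass (Sg j f) \<le> mass f"
  using mass_Sg nn_integral_indicator_le by (simp add: Lp_mass_def)

lemma mass_Tg_le: "f \<in> Lp_set M p \<Longrightarrow> mass (Tg j f) \<le> mass f"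
  using mass_Tg nn_integral_indicator_le by (simp add: Lp_mass_def)

lemma Sg_support: "f \<in> Lp_set M p \<Longrightarrow> AE y in M. y \<notin> F j \<longrightarrow> Sg j f y = 0"
  by (rule spatial_op_support[OF spS])

text \<open>s_k f vanishes on F_j for j \<noteq> k, because t_j s_k = 0 and t_j is isometric on F_j.\<close>
lemma Sg_vanishes_on_range:
  assumes jk: "j \<noteq> k" and f: "f \<in> Lp_set M p"
  shows "AE y in M. y \<in> F j \<longrightarrow> Sg k f y = 0"
proof -
  have Sf: "Sg k f \<in> Lp_set M p" using lp_opD(1)[OF lp_op_Sg f] .
  have mS: "Sg k f \<in> borel_measurable M" using Sf by (simp add: Lp_set_def)
  have "(\<integral>\<^sup>+ x. indicator (F j) x * ennreal (cmod (Sg k f x) powr p) \<partial>M) = mass (Tg j (Sg k f))"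
    using mass_Tg[OF Sf] by simp
  also have "\<dots> = (\<integral>\<^sup>+ x. 0 \<partial>M)" unfolding Lp_mass_def
    by (rule nn_integral_cong_AE) (use Tg_Sg_other_ae[OF jk f] p0 in \<open>auto elim!: AE_mp\<close>)
  finally have "(\<integral>\<^sup>+ x. indicator (F j) x * ennreal (cmod (Sg k f x) powr p) \<partial>M) = 0" by simp
  moreover have "(\<lambda>x. indicator (F j) x * ennreal (cmod (Sg k f x) powr p)) \<in> borel_measurable M"
  proof -
    note [measurable] = F_sets mS
    show ?thesis by measurable
  qed
  ultimately have "AE x in M. indicator (F j) x * ennreal (cmod (Sg k f x) powr p) = 0"
    by (subst (asm) nn_integral_0_iff_AE)
  then show ?thesis by eventually_elim (auto simp: indicator_def)
qed

lemma overlap_density_zero: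
  fixes h :: "'a \<Rightarrow> real"
  assumes jk: "j \<noteq> k" and X: "X \<in> sets M" "X \<subseteq> E k" "emeasure M X \<noteq> \<infinity>"
    and form: "\<And>\<xi>. \<xi> \<in> Lp_set M p \<Longrightarrow> AE y in M.
      Sg k \<xi> y = (if y \<in> F k then g k y * complex_of_real (h y powr (1 / p)) * Tf k \<xi> y else 0)"
  shows "AE y in M. y \<in> S k X \<inter> F j \<longrightarrow> h y = 0"
proof -
  have im: "induced_map M (E k) (F k) (S k) (Tf k)" and mst: "mst M (E k) (F k) (S k)"
    and gm: "AE y in M. y \<in> F k \<longrightarrow> cmod (g k y) = 1"
    using spS[of k] unfolding spatial_op_def mst_bij_def by auto
  have \<xi>: "(\<lambda>x. indicator X x :: complex) \<in> Lp_set M p" by (rule Lp_indicator[OF p0 X(1,3)])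
  have ind: "AE y in M. y \<in> F k \<longrightarrow> Tf k (indicator X) y = indicator (S k X) y"
    by (rule induced_map_indicator[OF im X(1,2)])
  have SX: "S k X \<subseteq> F k" using mst_sets[OF mst X(1,2)] by simp
  show ?thesis using form[OF \<xi>] ind Sg_vanishes_on_range[OF jk \<xi>] gm
  proof eventually_elim
    case (elim y)
    show ?case
    proof
      assume y: "y \<in> S k X \<inter> F j"
      then have "0 = g k y * complex_of_real (h y powr (1 / p))"
        using elim SX by (auto simp: indicator_def)
      moreover have "g k y \<noteq> 0" using elim y SX by auto
      ultimately show "h y = 0" by simp
    qed
  qed
qed

text \<open>If \<open>S\<^sub>k B \<approx> F\<^sub>j \<inter> F\<^sub>k\<close>, the
  density of \<open>S\<^sub>k\<^sub>*(\<mu>|\<^sub>E\<^sub>k)\<close> vanishes on \<open>S\<^sub>k B\<close>, so every finite-measure part of B is null.\<close>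
lemma ranges_disjoint:
  assumes jk: "j \<noteq> k"
  shows "F j \<inter> F k \<in> null_sets M"
proof -
  obtain h where Ek: "E k \<in> sets M" and Fk: "F k \<in> sets M" and bij: "mst_bij M (E k) (F k) (S k)"
    and mst: "mst M (E k) (F k) (S k)" and "induced_map M (E k) (F k) (S k) (Tf k)"
    and "g k \<in> borel_measurable M" and "AE y in M. y \<in> F k \<longrightarrow> cmod (g k y) = 1"
    and "h \<in> borel_measurable M" and "\<And>y. 0 \<le> h y"
    and hS: "\<And>A. A \<in> sets M \<Longrightarrow> A \<subseteq> E k \<Longrightarrow> (\<integral>\<^sup>+ y. ennreal (h y) * indicator (S k A) y \<partial>M) = emeasure M A"
    and form: "\<And>\<xi>. \<xi> \<in> Lp_set M p \<Longrightarrow> AE y in M. Sg k \<xi> y = (if y \<in> F k then g k y * complex_of_real (h y powr (1 / p)) * Tf k \<xi> y else 0)"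
    by (rule spatial_opD[OF spS[of k]], rule that)
  define G0 where "G0 = F j \<inter> F k"
  have G0s: "G0 \<in> sets M" using F_sets by (auto simp: G0_def)
  obtain B where Bs: "B \<in> sets M" and BE: "B \<subseteq> E k" and SB: "ae_seteq M (S k B) G0"
    using mst_bij_surj[OF bij G0s] by (auto simp: G0_def)
  have "B \<in> null_sets M"
  proof (rule sigma_finite_measure.null_if_finite_subsets_null[OF sf Bs])
    fix X assume Xs: "X \<in> sets M" and XB: "X \<subseteq> B" and Xfin: "emeasure M X \<noteq> \<infinity>"
    have XE: "X \<subseteq> E k" using XB BE by blast
    have in_B: "AE y in M. y \<notin> S k X - S k B"
      by (rule AE_not_in[OF mst_mono[OF mst Ek Fk Xs XB Bs BE]])
    have overlap: "AE y in M. y \<in> S k X \<inter> F j \<longrightarrow> h y = 0"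
      by (rule overlap_density_zero[OF jk Xs XE Xfin]) (rule form)
    have "AE y in M. y \<in> S k X \<longrightarrow> h y = 0"
      using overlap in_B ae_seteq_AE[OF SB]
      by eventually_elim (auto simp: G0_def)
    then have "(\<integral>\<^sup>+ y. ennreal (h y) * indicator (S k X) y \<partial>M) = (\<integral>\<^sup>+ y. 0 \<partial>M)"
      by (intro nn_integral_cong_AE) (auto elim!: AE_mp simp: indicator_def)
    then show "emeasure M X = 0" using hS[OF Xs XE] by simp
  qed
  have "ae_seteq M (S k B) (S k {})"
    by (rule mst_cong[OF mst Bs BE]) (use \<open>B \<in> null_sets M\<close> in \<open>auto simp: null_ae_seteq\<close>)
  then have "S k B \<in> null_sets M"
    using mst_empty[OF mst Ek Fk] mst_sets[OF mst Bs BE] by (auto intro: ae_seteq_null)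
  then show ?thesis using ae_seteq_null[OF ae_seteq_sym[OF SB]] G0s by (simp add: G0_def)
qed

lemma Sg_disjoint:
  fixes n :: nat
  assumes gg: "\<And>k. k < n \<Longrightarrow> gg k \<in> Lp_set M p"
  shows "AE y in M. \<forall>k<n. \<forall>l<n. k \<noteq> l \<longrightarrow> Sg k (gg k) y = 0 \<or> Sg l (gg l) y = 0"
proof -
  have off_range: "AE y in M. \<forall>k\<in>{..<n}. y \<notin> F k \<longrightarrow> Sg k (gg k) y = 0"
    by (rule AE_finite_allI) (auto intro: Sg_support gg)
  have on_other_range: "AE y in M. \<forall>k\<in>{..<n}. \<forall>l\<in>{..<n}. k \<noteq> l \<longrightarrow> y \<in> F k \<longrightarrow> Sg l (gg l) y = 0"
  proof (rule AE_finite_allI, simp, rule AE_finite_allI, simp)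
    fix k l assume "k \<in> {..<n}" "l \<in> {..<n}"
    then show "AE y in M. k \<noteq> l \<longrightarrow> y \<in> F k \<longrightarrow> Sg l (gg l) y = 0"
      using Sg_vanishes_on_range[of k l "gg l"] gg by (cases "k = l") auto
  qed
  show ?thesis using off_range on_other_range by eventually_elim (metis lessThan_iff)
qed

lemma range_masses_le:
  fixes n :: nat
  assumes f: "f \<in> Lp_set M p"
  shows "(\<Sum>k<n. \<integral>\<^sup>+ x. indicator (F k) x * ennreal (cmod (f x) powr p) \<partial>M) \<le> mass f"
proof -
  have mf: "f \<in> borel_measurable M" using f by (simp add: Lp_set_def)
  have d: "AE y in M. \<forall>k\<in>{..<n}. \<forall>l\<in>{..<n}. k \<noteq> l \<longrightarrow> y \<notin> F k \<inter> F l"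
  proof (rule AE_finite_allI, simp, rule AE_finite_allI, simp)
    fix k l
    show "AE y in M. k \<noteq> l \<longrightarrow> y \<notin> F k \<inter> F l"
    proof (cases "k = l")
      case False
      from AE_not_in[OF ranges_disjoint[OF False]] show ?thesis by eventually_elim auto
    qed simp
  qed
  have "(\<Sum>k<n. \<integral>\<^sup>+ x. indicator (F k) x * ennreal (cmod (f x) powr p) \<partial>M)
      = (\<integral>\<^sup>+ x. (\<Sum>k<n. indicator (F k) x * ennreal (cmod (f x) powr p)) \<partial>M)"
    using F_sets mf by (intro nn_integral_sum[symmetric]) auto
  also have "\<dots> \<le> (\<integral>\<^sup>+ x. ennreal (cmod (f x) powr p) \<partial>M)"
  proof (rule nn_integral_mono_AE)
    show "AE x in M. (\<Sum>k<n. indicator (F k) x * ennreal (cmod (f x) powr p)) \<le> ennreal (cmod (f x) powr p)"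
      using d
    proof eventually_elim
      case (elim y)
      show ?case
      proof (cases "\<exists>k0<n. y \<in> F k0")
        case True
        then obtain k0 where k0: "k0 < n" "y \<in> F k0" by blast
        have "(\<Sum>k<n. indicator (F k) y * ennreal (cmod (f y) powr p)) = (\<Sum>k<n. if k = k0 then ennreal (cmod (f y) powr p) else 0)"
          using elim k0 by (intro sum.cong) (auto simp: indicator_def)
        also have "\<dots> = ennreal (cmod (f y) powr p)" using k0 by simp
        finally show ?thesis by simp
      next
        case False
        then have "(\<Sum>k<n. indicator (F k) y * ennreal (cmod (f y) powr p)) = 0"
          by (intro sum.neutral) (auto simp: indicator_def)
        then show ?thesis by (metis zero_le)
      qed
    qed
  qed
  finally show ?thesis by (simp add: Lp_mass_def)
qed

lemma column_estimate:
  fixes n :: nat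
  assumes f: "f \<in> Lp_set M p"
  shows "Lp_norm M p (\<lambda>y. \<Sum>k<n. c k * Sg k (Tg 0 f) y) \<le> (\<Sum>k<n. cmod (c k) powr p) powr (1/p) * Lp_norm M p f"
proof (rule Lp_norm_le_from_mass[OF p0])
  show "(\<lambda>y. \<Sum>k<n. c k * Sg k (Tg 0 f) y) \<in> Lp_set M p" using f by (intro Lp_sum p Lp_Sg Lp_Tg)
  define A where "A = (\<Sum>k<n. cmod (c k) powr p)"
  have A0: "0 \<le> A" by (simp add: A_def sum_nonneg)
  have "mass (\<lambda>y. \<Sum>k<n. c k * Sg k (Tg 0 f) y) = (\<Sum>k<n. ennreal (cmod (c k) powr p) * mass (Sg k (Tg 0 f)))"
    by (rule mass_disjoint_sum[OF p0]) (use f Sg_disjoint[of n "\<lambda>_. Tg 0 f"] in \<open>auto intro: Lp_measurable Lp_Sg Lp_Tg\<close>)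
  also have "\<dots> \<le> (\<Sum>k<n. ennreal (cmod (c k) powr p) * mass f)"
  proof (intro sum_mono mult_left_mono)
    fix k show "mass (Sg k (Tg 0 f)) \<le> mass f" using mass_Sg_le[OF Lp_Tg[OF f]] mass_Tg_le[OF f] by (rule order.trans)
  qed simp
  also have "\<dots> = ennreal A * mass f"
  proof -
    have "ennreal A = (\<Sum>k<n. ennreal (cmod (c k) powr p))" unfolding A_def by (rule sum_ennreal[symmetric]) auto
    then show ?thesis by (simp only: sum_distrib_right)
  qed
  also have "A = (A powr (1/p)) powr p" using A0 p0 by (simp add: powr_powr)
  finally show "mass (\<lambda>y. \<Sum>k<n. c k * Sg k (Tg 0 f) y) \<le> ennreal (((\<Sum>k<n. cmod (c k) powr p) powr (1/p)) powr p) * mass f"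
    by (simp add: A_def)
qed (use f in auto)

lemma row_estimate:
  fixes n :: nat and a :: "nat \<Rightarrow> real"
  assumes f: "f \<in> Lp_set M p" and a0: "\<And>j. 0 \<le> a j" and z: "\<And>j. cmod (z j) = a j powr (p - 1)"
  shows "Lp_norm M p (\<lambda>y. \<Sum>j<n. z j * Sg 0 (Tg j f) y) \<le> (\<Sum>j<n. a j powr p) powr ((p - 1) / p) * Lp_norm M p f"
proof (rule Lp_norm_le_from_mass[OF p0])
  show "(\<lambda>y. \<Sum>j<n. z j * Sg 0 (Tg j f) y) \<in> Lp_set M p" using f by (intro Lp_sum p Lp_Sg Lp_Tg)
  define A where "A = (\<Sum>j<n. a j powr p)"
  define w where "w = (\<lambda>x. \<Sum>j<n. z j * Tg j f x)"
  have w: "w \<in> Lp_set M p" unfolding w_def using f by (intro Lp_sum p Lp_Tg)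
  have lin: "AE y in M. Sg 0 w y = (\<Sum>j<n. z j * Sg 0 (Tg j f) y)"
    unfolding w_def by (rule lp_op_sum_ae[OF p lp_op_Sg]) (use f in \<open>auto intro: Lp_Tg\<close>)
  have "mass (\<lambda>y. \<Sum>j<n. z j * Sg 0 (Tg j f) y) = mass (Sg 0 w)"
    unfolding Lp_mass_def by (rule nn_integral_cong_AE) (use lin in \<open>auto elim!: AE_mp\<close>)
  also have "\<dots> \<le> mass w" by (rule mass_Sg_le[OF w])
  also have "\<dots> \<le> ennreal (A powr (p - 1)) * (\<Sum>j<n. mass (Tg j f))"
    unfolding w_def A_def using f by (intro mass_weighted_sum_le[OF p _ a0 z] Lp_measurable Lp_Tg)
  also have "\<dots> \<le> ennreal (A powr (p - 1)) * mass f"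
  proof (intro mult_left_mono)
    have "(\<Sum>j<n. mass (Tg j f)) = (\<Sum>j<n. \<integral>\<^sup>+ x. indicator (F j) x * ennreal (cmod (f x) powr p) \<partial>M)"
      using mass_Tg[OF f] by simp
    also have "\<dots> \<le> mass f" by (rule range_masses_le[OF f])
    finally show "(\<Sum>j<n. mass (Tg j f)) \<le> mass f" .
  qed simp
  also have "A powr (p - 1) = (A powr ((p - 1) / p)) powr p" using p0 by (simp add: powr_powr)
  finally show "mass (\<lambda>y. \<Sum>j<n. z j * Sg 0 (Tg j f) y) \<le> ennreal (((\<Sum>j<n. a j powr p) powr ((p - 1) / p)) powr p) * mass f"
    by (simp add: A_def)
qed (use f p0 in \<open>auto intro: powr_ge_zero\<close>)

end

locale complex_scaled =
  fixes cm :: "complex \<Rightarrow> 'e::real_normed_vector \<Rightarrow> 'e"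
  assumes cs: "complex_scaling cm"
begin

lemma cm1: "cm 1 x = x" and cm_mult: "cm a (cm b x) = cm (a * b) x"
  and cm_addl: "cm (a + b) x = cm a x + cm b x" and cm_addr: "cm a (x + y) = cm a x + cm a y"
  and cm_real: "cm (complex_of_real r) x = r *\<^sub>R x" and cm_norm: "norm (cm a x) = cmod a * norm x"
  using cs unfolding complex_scaling_def by auto

lemma cm_zero: "cm a 0 = 0" using cm_norm[of a 0] by simp

lemma cm_zero_left: "cm 0 x = 0" using cm_norm[of 0 x] by simp

lemma cm_sumr: "cm (\<Sum>i\<in>A. a i) x = (\<Sum>i\<in>A. cm (a i) x)"
  by (induction A rule: infinite_finite_induct) (auto simp: cm_zero_left cm_addl)

lemma cm_diffl: "cm (a - b) v = cm a v - cm b v"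
  using cm_addl[of "a - b" b v] by (simp add: algebra_simps)

lemma cm_minus_one: "cm (-1) v = - v"
  using cm_diffl[of 0 1 v] by (simp add: cm1 cm_zero_left)

lemma cm_bl: "bounded_linear (cm c)"
proof (rule bounded_linear_intro[where K = "cmod c"])
  show "cm c (x + y) = cm c x + cm c y" for x y by (rule cm_addr)
  show "cm c (r *\<^sub>R x) = r *\<^sub>R cm c x" for r x
    by (metis cm_mult cm_real mult.commute)
  show "norm (cm c x) \<le> norm x * cmod c" for x by (simp add: cm_norm mult.commute)
qed

end

lemma sum_restrict_range:
  fixes X :: "nat \<Rightarrow> 'b::comm_monoid_add"
  shows "(\<Sum>k<n. if k \<in> {m..<n} then X k else 0) = (\<Sum>k\<in>{m..<n}. X k)"
proof -
  have "(\<Sum>k<n. if k \<in> {m..<n} then X k else 0) = sum X ({..<n} \<inter> {m..<n})"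
    by (rule sum.inter_restrict[OF finite_lessThan, symmetric])
  moreover have "{..<n} \<inter> {m..<n} = {m..<n}" by auto
  ultimately show ?thesis by simp
qed

text \<open>Dual coefficients z = conj c |c|^(p-2), with |z| = |c|^(p-1) and z c = |c|^p; they
  realise the l^p norm as a pairing against an element of the dual space.\<close>
definition dual_coeff :: "real \<Rightarrow> complex \<Rightarrow> complex" where
  "dual_coeff p c = (if c = 0 then 0 else cnj c * complex_of_real (cmod c powr (p - 2)))"

lemma dual_coeff_norm: "cmod (dual_coeff p c) = cmod c powr (p - 1)"
proof (cases "c = 0")
  case False
  have "cmod (dual_coeff p c) = cmod c powr 1 * cmod c powr (p - 2)" using False by (simp add: dual_coeff_def norm_mult)
  also have "\<dots> = cmod c powr (p - 1)" by (simp only: powr_add[symmetric]) simp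
  finally show ?thesis .
qed (simp add: dual_coeff_def)

lemma dual_coeff_mult:
  assumes "0 < p"
  shows "dual_coeff p c * c = complex_of_real (cmod c powr p)"
proof (cases "c = 0")
  case False
  have sq: "cnj c * c = complex_of_real (cmod c powr 2)"
    using complex_norm_square[of c] False by (simp add: mult.commute powr_realpow)
  have "dual_coeff p c * c = complex_of_real (cmod c powr (p - 2)) * (cnj c * c)"
    using False by (simp add: dual_coeff_def mult_ac)
  also have "\<dots> = complex_of_real (cmod c powr 2 * cmod c powr (p - 2))"
    unfolding sq of_real_mult[symmetric] by (simp only: mult.commute)
  also have "cmod c powr 2 * cmod c powr (p - 2) = cmod c powr p"
    by (simp only: powr_add[symmetric]) simp
  finally show ?thesis .
qed (use assms in \<open>simp add: dual_coeff_def\<close>)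

locale spatial_hom = spatial_generators M p Sg Tg E F S S' g Tf Tf' + complex_scaled cm
  for M :: "'a measure" and p :: real and Sg Tg :: "nat \<Rightarrow> 'a lpop"
    and E F :: "nat \<Rightarrow> 'a set" and S S' :: "nat \<Rightarrow> 'a set \<Rightarrow> 'a set" and g :: "nat \<Rightarrow> 'a \<Rightarrow> complex"
    and Tf Tf' :: "nat \<Rightarrow> 'a lpop" and cm :: "complex \<Rightarrow> 'e::banach \<Rightarrow> 'e" +
  fixes \<phi> :: "'a lpop \<Rightarrow> 'e \<Rightarrow> 'e"
  assumes hom: "cont_hom_nonzero M p (rho_closure M p Sg Tg) cm \<phi>"
begin

abbreviation "D \<equiv> rho_closure M p Sg Tg"

abbreviation wop where "wop w \<equiv> word_op Sg Tg w"

definition comb :: "nat \<Rightarrow> (nat \<Rightarrow> complex) \<Rightarrow> (nat \<Rightarrow> (bool \<times> nat) list) \<Rightarrow> 'a lpop" where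
  "comb n c w = (\<lambda>f x. \<Sum>i<n. c i * wop (w i) f x)"

lemma hom_cbl: "T \<in> D \<Longrightarrow> cbl cm (\<phi> T)"
  and hom_opeq: "T \<in> D \<Longrightarrow> U \<in> D \<Longrightarrow> lp_opeq M p T U \<Longrightarrow> \<phi> T = \<phi> U"
  and hom_add: "T \<in> D \<Longrightarrow> U \<in> D \<Longrightarrow> \<phi> (\<lambda>f x. T f x + U f x) = (\<lambda>v. \<phi> T v + \<phi> U v)"
  and hom_scale: "T \<in> D \<Longrightarrow> \<phi> (\<lambda>f x. c * T f x) = (\<lambda>v. cm c (\<phi> T v))"
  and hom_comp: "T \<in> D \<Longrightarrow> U \<in> D \<Longrightarrow> \<phi> (T \<circ> U) = \<phi> T \<circ> \<phi> U"
  using hom unfolding cont_hom_nonzero_def by blast+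

lemma hom_cont: "T \<in> D \<Longrightarrow> 0 < \<epsilon> \<Longrightarrow> \<exists>\<delta>>0. \<forall>U\<in>D. lp_opnorm M p (\<lambda>f x. T f x - U f x) < \<delta> \<longrightarrow> onorm (\<lambda>v. \<phi> T v - \<phi> U v) < \<epsilon>"
proof -
  have "\<forall>T\<in>D. \<forall>\<epsilon>>0. \<exists>\<delta>>0. \<forall>U\<in>D.
        lp_opnorm M p (\<lambda>f x. T f x - U f x) < \<delta> \<longrightarrow> onorm (\<lambda>v. \<phi> T v - \<phi> U v) < \<epsilon>"
    using hom unfolding cont_hom_nonzero_def by (elim conjE)
  then show "T \<in> D \<Longrightarrow> 0 < \<epsilon> \<Longrightarrow> ?thesis" by blast
qed

lemma hom_nonzero: "\<exists>T\<in>D. \<exists>v. \<phi> T v \<noteq> 0"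
  using hom unfolding cont_hom_nonzero_def by (elim conjE)

lemma hom_bounded_linear: "T \<in> D \<Longrightarrow> bounded_linear (\<phi> T)"
  using hom_cbl unfolding cbl_def by blast

lemma phi_cm: "T \<in> D \<Longrightarrow> \<phi> T (cm c x) = cm c (\<phi> T x)"
  using hom_cbl unfolding cbl_def by blast

lemma phi_vec_zero: "T \<in> D \<Longrightarrow> \<phi> T 0 = 0"
  using hom_bounded_linear linear_0 bounded_linear.linear by blast

lemma lp_op_wop: "lp_op M p (wop w)"
  by (rule lp_op_word[OF p lp_op_Sg lp_op_Tg])

lemma rho_image_in_D: "lp_op M p T \<Longrightarrow> T \<in> rho_image Sg Tg \<Longrightarrow> T \<in> D"
  unfolding rho_closure_def
proof (intro CollectI conjI allI impI)
  fix \<epsilon> :: real assume T: "lp_op M p T" "T \<in> rho_image Sg Tg" and e: "0 < \<epsilon>"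
  have "lp_opnorm M p (\<lambda>f x. T f x - T f x) \<le> 0"
    by (rule lp_opnorm_le) (auto simp: Lp_norm_zero)
  then show "\<exists>A\<in>rho_image Sg Tg. lp_opnorm M p (\<lambda>f x. T f x - A f x) < \<epsilon>" using T e by force
qed

lemma comb_rho: "comb n c w \<in> rho_image Sg Tg"
  unfolding comb_def rho_image_def by blast

lemma comb_lp: "lp_op M p (comb n c w)"
  unfolding comb_def by (rule lp_op_sum[OF p lp_op_wop])

lemma comb_D: "comb n c w \<in> D" by (rule rho_image_in_D[OF comb_lp comb_rho])

lemma wop_comb: "wop w = comb 1 (\<lambda>_. 1) (\<lambda>_. w)" by (simp add: comb_def)

lemma wop_D: "wop w \<in> D" by (subst wop_comb) (rule comb_D)

lemma zero_D: "(\<lambda>f x. 0) \<in> D"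
proof -
  have "(\<lambda>f x. 0) = comb 0 c w" for c w by (simp add: comb_def)
  then show ?thesis using comb_D by metis
qed

lemma scale_comb: "(\<lambda>f x. t * comb n c w f x) = comb n (\<lambda>i. t * c i) w"
  by (simp add: comb_def sum_distrib_left mult.assoc)

lemma phi_zero_op: "\<phi> (\<lambda>f x. 0) = (\<lambda>v. 0)"
proof -
  have "\<phi> (\<lambda>f x. 0 + 0) = (\<lambda>v. \<phi> (\<lambda>f x. 0) v + \<phi> (\<lambda>f x. 0) v)" by (rule hom_add[OF zero_D zero_D])
  then have "\<And>v. \<phi> (\<lambda>f x. 0) v = \<phi> (\<lambda>f x. 0) v + \<phi> (\<lambda>f x. 0) v" by (metis add_0)
  then show ?thesis by (intro ext) (metis add_cancel_right_right)
qed

lemma phi_comb: "\<phi> (comb n c w) = (\<lambda>v. \<Sum>i<n. cm (c i) (\<phi> (wop (w i)) v))"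
proof (induction n)
  case 0
  then show ?case using phi_zero_op by (simp add: comb_def)
next
  case (Suc n)
  have e: "comb (Suc n) c w = (\<lambda>f x. comb n c w f x + (\<lambda>f x. c n * wop (w n) f x) f x)"
    by (simp add: comb_def)
  have "\<phi> (comb (Suc n) c w) = (\<lambda>v. \<phi> (comb n c w) v + \<phi> (\<lambda>f x. c n * wop (w n) f x) v)"
  proof -
    have "(\<lambda>f x. c n * wop (w n) f x) = comb 1 (\<lambda>_. c n) (\<lambda>_. w n)" by (simp add: comb_def)
    then have "(\<lambda>f x. c n * wop (w n) f x) \<in> D" using comb_D by metis
    then show ?thesis unfolding e by (rule hom_add[OF comb_D])
  qed
  also have "\<dots> = (\<lambda>v. \<Sum>i<Suc n. cm (c i) (\<phi> (wop (w i)) v))"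
    using Suc hom_scale[OF wop_D, of "c n" "w n"] by simp
  finally show ?case .
qed

abbreviation e where "e j k \<equiv> wop [(True, j), (False, k)]"


lemma e_eval: "e j k f = Sg j (Tg k f)" by (simp add: word_op_def)

lemma e_fun: "e j k = (\<lambda>f. Sg j (Tg k f))" by (simp add: word_op_def comp_def)

lemma Sg_wop: "wop [(True, j)] = Sg j" by (simp add: word_op_def)

lemma Tg_wop: "wop [(False, j)] = Tg j" by (simp add: word_op_def)

lemma id_wop: "wop [] = id" by (simp add: word_op_def)

lemma foldr_comp: "foldr (\<lambda>(b, j) acc. (if b then Sg j else Tg j) \<circ> acc) a z =
   foldr (\<lambda>(b, j) acc. (if b then Sg j else Tg j) \<circ> acc) a id \<circ> z"
  by (induction a) (auto simp: comp_assoc split: prod.splits)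

lemma comp_wop: "wop a \<circ> wop b = wop (a @ b)"
  unfolding word_op_def foldr_append by (rule foldr_comp[symmetric])

lemma Sg_D: "Sg j \<in> D" using wop_D[of "[(True, j)]"] by (simp add: Sg_wop)

lemma Tg_D: "Tg j \<in> D" using wop_D[of "[(False, j)]"] by (simp add: Tg_wop)

lemma id_D: "id \<in> D" using wop_D[of "[]"] by (simp add: id_wop)

lemma e_D: "e j k \<in> D" by (rule wop_D)

lemma comp_D: "wop a \<circ> wop b \<in> D" by (simp add: comp_wop wop_D)

lemma Sg_zero: "AE y in M. Sg j (\<lambda>x. 0) y = 0"
  using lp_op_sum_ae[OF p lp_op_Sg, where n=0] by simp

lemma matrix_unit_mult: "lp_opeq M p (e j k \<circ> e l m) (if k = l then e j m else (\<lambda>f x. 0))"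
  unfolding lp_opeq_def
proof
  fix f assume f: "f \<in> Lp_set M p"
  have gf: "Tg m f \<in> Lp_set M p" by (rule Lp_Tg[OF f])
  have gg: "Tg k (Sg l (Tg m f)) \<in> Lp_set M p" by (rule Lp_Tg[OF Lp_Sg[OF gf]])
  show "AE x in M. (e j k \<circ> e l m) f x = (if k = l then e j m else (\<lambda>f x. 0)) f x"
  proof (cases "k = l")
    case True
    have "AE x in M. Sg j (Tg k (Sg l (Tg m f))) x = Sg j (Tg m f) x"
      by (rule lp_opD(2)[OF lp_op_Sg gg gf]) (use Tg_Sg_ae[OF gf, of k] True in simp)
    then show ?thesis using True by (simp add: e_eval)
  next
    case False
    have "AE x in M. Sg j (Tg k (Sg l (Tg m f))) x = Sg j (\<lambda>x. 0) x"
      by (rule lp_opD(2)[OF lp_op_Sg gg Lp_zero]) (rule Tg_Sg_other_ae[OF False gf])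
    then show ?thesis using False Sg_zero[of j] by (auto simp: e_eval elim: AE_mp)
  qed
qed

lemma phi_matrix_unit_mult: "\<phi> (e j k) (\<phi> (e l m) v) = (if k = l then \<phi> (e j m) v else 0)"
proof -
  have "\<phi> (e j k \<circ> e l m) = \<phi> (e j k) \<circ> \<phi> (e l m)" by (rule hom_comp[OF e_D e_D])
  moreover have "\<phi> (e j k \<circ> e l m) = \<phi> (if k = l then e j m else (\<lambda>f x. 0))"
    by (rule hom_opeq[OF comp_D _ matrix_unit_mult]) (simp add: e_D zero_D)
  ultimately show ?thesis by (cases "k = l") (auto simp: phi_zero_op dest: fun_cong[where x = v])
qed

text \<open>phi does not kill e_00: otherwise \<open>\<phi>(1) = \<phi>(t\<^sub>0) \<phi>(e\<^sub>0\<^sub>0) \<phi>(s\<^sub>0)\<close> would vanish, and then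
  phi would vanish identically.\<close>
lemma phi_e00_nonzero: "\<exists>\<xi>. \<phi> (e 0 0) \<xi> \<noteq> 0"
proof (rule ccontr)
  assume "\<not> ?thesis"
  then have z: "\<And>\<xi>. \<phi> (e 0 0) \<xi> = 0" by blast
  obtain T v where T: "T \<in> D" and v: "\<phi> T v \<noteq> 0" using hom_nonzero by blast
  have "\<phi> (T \<circ> id) = \<phi> T \<circ> \<phi> id" by (rule hom_comp[OF T id_D])
  then have "\<phi> T v = \<phi> T (\<phi> id v)" by (simp add: fun_eq_iff)
  then have idv: "\<phi> id v \<noteq> 0" using v phi_vec_zero[OF T] by auto
  have "\<phi> id = \<phi> (Tg 0 \<circ> Sg 0)"
  proof (rule hom_opeq[OF id_D])
    show "Tg 0 \<circ> Sg 0 \<in> D" using comp_D[of "[(False, 0)]" "[(True, 0)]"] by (simp add: Sg_wop Tg_wop)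
    show "lp_opeq M p id (Tg 0 \<circ> Sg 0)" unfolding lp_opeq_def
    proof
      fix f assume "f \<in> Lp_set M p"
      from Tg_Sg_ae[OF this, of 0] show "AE x in M. id f x = (Tg 0 \<circ> Sg 0) f x" by eventually_elim simp
    qed
  qed
  also have "\<dots> = \<phi> (Tg 0) \<circ> \<phi> (Sg 0)" by (rule hom_comp[OF Tg_D Sg_D])
  finally have i1: "\<phi> id = \<phi> (Tg 0) \<circ> \<phi> (Sg 0)" .
  have "\<phi> (id \<circ> id) = \<phi> id \<circ> \<phi> id" by (rule hom_comp[OF id_D id_D])
  then have i2: "\<phi> id v = \<phi> id (\<phi> id v)" by (simp add: fun_eq_iff)
  have "\<phi> (Sg 0 \<circ> Tg 0) = \<phi> (Sg 0) \<circ> \<phi> (Tg 0)" by (rule hom_comp[OF Sg_D Tg_D])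
  moreover have "Sg 0 \<circ> Tg 0 = e 0 0" by (simp add: e_fun comp_def)
  ultimately have i3: "\<phi> (Sg 0) (\<phi> (Tg 0) x) = \<phi> (e 0 0) x" for x by (simp add: fun_eq_iff)
  have "\<phi> id v = \<phi> (Tg 0) (\<phi> (Sg 0) (\<phi> (Tg 0) (\<phi> (Sg 0) v)))" using i1 i2 by simp
  also have "\<dots> = \<phi> (Tg 0) 0" using i3 z by simp
  also have "\<dots> = 0" by (rule phi_vec_zero[OF Tg_D])
  finally show False using idv by simp
qed

text \<open>Continuity of phi at 0 gives a radius dl such that operators of norm below dl are
  mapped to contractions; by scaling, \<open>\<parallel>\<phi>(U)\<parallel> \<le> (2/dl) \<parallel>U\<parallel>\<close> on combinations of words.\<close>
definition dl where
  "dl = (SOME \<delta>. \<delta> > 0 \<and> (\<forall>U\<in>D. lp_opnorm M p (\<lambda>f x. 0 - U f x) < \<delta> \<longrightarrow> onorm (\<lambda>v. \<phi> (\<lambda>f x. 0) v - \<phi> U v) < 1))"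

lemma dl: "dl > 0" "\<And>U. U \<in> D \<Longrightarrow> lp_opnorm M p (\<lambda>f x. 0 - U f x) < dl \<Longrightarrow> onorm (\<lambda>v. \<phi> (\<lambda>f x. 0) v - \<phi> U v) < 1"
proof -
  have "\<exists>\<delta>>0. \<forall>U\<in>D. lp_opnorm M p (\<lambda>f x. 0 - U f x) < \<delta> \<longrightarrow> onorm (\<lambda>v. \<phi> (\<lambda>f x. 0) v - \<phi> U v) < 1"
    by (rule hom_cont[OF zero_D]) simp
  then have "dl > 0 \<and> (\<forall>U\<in>D. lp_opnorm M p (\<lambda>f x. 0 - U f x) < dl \<longrightarrow> onorm (\<lambda>v. \<phi> (\<lambda>f x. 0) v - \<phi> U v) < 1)"
    unfolding dl_def by (rule someI_ex)
  then show "dl > 0" "\<And>U. U \<in> D \<Longrightarrow> lp_opnorm M p (\<lambda>f x. 0 - U f x) < dl \<Longrightarrow> onorm (\<lambda>v. \<phi> (\<lambda>f x. 0) v - \<phi> U v) < 1"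
    by auto
qed

lemma phi_small:
  assumes U: "U \<in> D" and B: "0 \<le> B" "B < dl" and le: "\<And>f. f \<in> Lp_set M p \<Longrightarrow> Lp_norm M p (U f) \<le> B * Lp_norm M p f"
  shows "norm (\<phi> U v) \<le> norm v"
proof -
  have "lp_opnorm M p (\<lambda>f x. 0 - U f x) \<le> B"
  proof (rule lp_opnorm_le[OF B(1)])
    fix f assume f: "f \<in> Lp_set M p"
    have "Lp_norm M p (\<lambda>x. 0 - U f x) = Lp_norm M p (U f)" by (simp add: Lp_norm_def)
    then show "Lp_norm M p (\<lambda>x. 0 - U f x) \<le> B * Lp_norm M p f" using le[OF f] by simp
  qed
  then have "onorm (\<lambda>v. \<phi> (\<lambda>f x. 0) v - \<phi> U v) < 1" using B by (intro dl(2)[OF U]) auto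
  moreover have "(\<lambda>v. \<phi> (\<lambda>f x. 0) v - \<phi> U v) = (\<lambda>v. - \<phi> U v)" by (simp add: phi_zero_op)
  ultimately have "onorm (\<phi> U) < 1" by (simp add: onorm_neg)
  moreover have "norm (\<phi> U v) \<le> onorm (\<phi> U) * norm v" by (rule onorm[OF hom_bounded_linear[OF U]])
  moreover have "onorm (\<phi> U) * norm v \<le> 1 * norm v"
    using \<open>onorm (\<phi> U) < 1\<close> by (intro mult_right_mono) auto
  ultimately show ?thesis by linarith
qed

lemma phi_scaled_bound:
  assumes A: "0 \<le> A" and le: "\<And>f. f \<in> Lp_set M p \<Longrightarrow> Lp_norm M p (comb n c w f) \<le> A * Lp_norm M p f"
    and t: "0 < t" "t * A < dl"
  shows "t * norm (\<phi> (comb n c w) v) \<le> norm v"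
proof -
  define U where "U = comb n (\<lambda>i. complex_of_real t * c i) w"
  have Ueq: "U = (\<lambda>f x. complex_of_real t * comb n c w f x)" unfolding U_def by (rule scale_comb[symmetric])
  have UD: "U \<in> D" unfolding U_def by (rule comb_D)
  have "norm (\<phi> U v) \<le> norm v"
  proof (rule phi_small[OF UD])
    show "0 \<le> t * A" "t * A < dl" using t A by auto
    fix f assume f: "f \<in> Lp_set M p"
    have "Lp_norm M p (U f) = t * Lp_norm M p (comb n c w f)"
      unfolding Ueq using t p by (simp add: Lp_norm_scale)
    also have "\<dots> \<le> t * (A * Lp_norm M p f)" using le[OF f] t by (intro mult_left_mono) auto
    finally show "Lp_norm M p (U f) \<le> t * A * Lp_norm M p f" by (simp add: mult.assoc)
  qed
  moreover have "\<phi> U v = cm (complex_of_real t) (\<phi> (comb n c w) v)" unfolding Ueq by (simp add: hom_scale[OF comb_D])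
  ultimately show ?thesis using t by (simp add: cm_norm)
qed

lemma phi_bound:
  assumes A: "0 \<le> A" and le: "\<And>f. f \<in> Lp_set M p \<Longrightarrow> Lp_norm M p (comb n c w f) \<le> A * Lp_norm M p f"
  shows "norm (\<phi> (comb n c w) v) \<le> (2 / dl) * A * norm v"
proof -
  define X where "X = \<phi> (comb n c w) v"
  have key: "t * norm X \<le> norm v" if "0 < t" "t * A < dl" for t
    unfolding X_def by (rule phi_scaled_bound[OF A _ that]) (rule le)
  show ?thesis
  proof (cases "A = 0")
    case True
    have "X = 0"
    proof (rule ccontr)
      assume X: "X \<noteq> 0"
      define t where "t = (norm v + 1) / norm X"
      have tpos: "0 < t" using X unfolding t_def by (intro divide_pos_pos) (auto intro: add_nonneg_pos)
      have "t * norm X \<le> norm v" using key[OF tpos] True dl(1) by simp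
      moreover have "t * norm X = norm v + 1" using X by (simp add: t_def)
      ultimately show False by simp
    qed
    then show ?thesis using True by (simp add: X_def)
  next
    case False
    then have Apos: "0 < A" using A by simp
    define t where "t = dl / (2 * A)"
    have tpos: "0 < t" using Apos dl(1) by (simp add: t_def)
    have "t * A < dl" using Apos dl(1) by (simp add: t_def)
    then have "t * norm X \<le> norm v" using key tpos by blast
    then have "norm X \<le> norm v / t" using tpos by (simp add: field_simps)
    also have "\<dots> = (2 / dl) * A * norm v" using Apos dl(1) by (simp add: t_def field_simps)
    finally show ?thesis by (simp add: X_def)
  qed
qed

section \<open>The embedding of l^p\<close>

definition xi0 where "xi0 = (SOME \<xi>. \<phi> (e 0 0) \<xi> \<noteq> 0)"

definition eta where "eta = \<phi> (e 0 0) xi0"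

definition etak where "etak k = \<phi> (e k 0) eta"

lemma eta_ne: "eta \<noteq> 0"
  unfolding eta_def xi0_def using phi_e00_nonzero by (rule someI_ex)

lemma e0j_etak: "\<phi> (e 0 j) (etak k) = (if j = k then eta else 0)"
proof -
  have "\<phi> (e 0 j) (etak k) = (if j = k then \<phi> (e 0 0) eta else 0)" unfolding etak_def by (rule phi_matrix_unit_mult)
  moreover have "\<phi> (e 0 0) eta = eta" unfolding eta_def using phi_matrix_unit_mult[of 0 0 0 0 xi0] by simp
  ultimately show ?thesis by simp
qed

lemma comb_col: "comb n c (\<lambda>k. [(True, k), (False, 0)]) f = (\<lambda>y. \<Sum>k<n. c k * Sg k (Tg 0 f) y)"
  by (simp add: comb_def word_op_def)

lemma comb_row: "comb n c (\<lambda>k. [(True, 0), (False, k)]) f = (\<lambda>y. \<Sum>k<n. c k * Sg 0 (Tg k f) y)"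
  by (simp add: comb_def word_op_def)

definition C1 where "C1 = (2 / dl) * norm eta"

lemma C1_nonneg: "0 \<le> C1" using dl(1) by (simp add: C1_def)

lemma column_bound: "norm (\<Sum>k<n. cm (c k) (etak k)) \<le> C1 * (\<Sum>k<n. cmod (c k) powr p) powr (1/p)"
proof -
  have "norm (\<phi> (comb n c (\<lambda>k. [(True, k), (False, 0)])) eta) \<le> (2 / dl) * (\<Sum>k<n. cmod (c k) powr p) powr (1/p) * norm eta"
    by (rule phi_bound) (auto simp: comb_col intro: column_estimate)
  moreover have "\<phi> (comb n c (\<lambda>k. [(True, k), (False, 0)])) eta = (\<Sum>k<n. cm (c k) (etak k))"
    by (simp add: phi_comb etak_def)
  ultimately show ?thesis by (simp add: C1_def mult_ac)
qed

lemma column_block_bound: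
  "norm (\<Sum>k\<in>{m..<n}. cm (x k) (etak k)) \<le> C1 * (\<Sum>k\<in>{m..<n}. cmod (x k) powr p) powr (1/p)"
proof -
  define c where "c = (\<lambda>k. if k \<in> {m..<n} then x k else 0)"
  have "(\<Sum>k<n. cm (c k) (etak k)) = (\<Sum>k<n. if k \<in> {m..<n} then cm (x k) (etak k) else 0)"
    by (intro sum.cong) (auto simp: c_def cm_zero_left)
  also have "\<dots> = (\<Sum>k\<in>{m..<n}. cm (x k) (etak k))"
    by (rule sum_restrict_range)
  finally have 1: "(\<Sum>k<n. cm (c k) (etak k)) = (\<Sum>k\<in>{m..<n}. cm (x k) (etak k))" .
  have "(\<Sum>k<n. cmod (c k) powr p) = (\<Sum>k<n. if k \<in> {m..<n} then cmod (x k) powr p else 0)"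
    by (intro sum.cong) (auto simp: c_def)
  also have "\<dots> = (\<Sum>k\<in>{m..<n}. cmod (x k) powr p)"
    by (rule sum_restrict_range)
  finally have 2: "(\<Sum>k<n. cmod (c k) powr p) = (\<Sum>k\<in>{m..<n}. cmod (x k) powr p)" .
  show ?thesis using column_bound[of c n] 1 2 by simp
qed

lemma row_bound:
  assumes a0: "\<And>j. 0 \<le> a j" and z: "\<And>j. cmod (z j) = a j powr (p - 1)"
  shows "norm (\<Sum>j<n. cm (z j) (\<phi> (e 0 j) v)) \<le> (2 / dl) * (\<Sum>j<n. a j powr p) powr ((p - 1) / p) * norm v"
proof -
  have "norm (\<phi> (comb n z (\<lambda>k. [(True, 0), (False, k)])) v) \<le> (2 / dl) * (\<Sum>j<n. a j powr p) powr ((p - 1) / p) * norm v"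
    by (rule phi_bound) (auto simp: comb_row intro: row_estimate a0 z)
  moreover have "\<phi> (comb n z (\<lambda>k. [(True, 0), (False, k)])) v = (\<Sum>j<n. cm (z j) (\<phi> (e 0 j) v))"
    by (simp add: phi_comb)
  ultimately show ?thesis by simp
qed

definition emb where "emb x = (\<Sum>k. cm (x k) (etak k))"

lemma emb_summable:
  assumes x: "x \<in> lp_seq p"
  shows "summable (\<lambda>k. cm (x k) (etak k))"
  unfolding summable_Cauchy
proof (intro allI impI)
  fix \<epsilon> :: real assume e: "0 < \<epsilon>"
  define e' where "e' = (\<epsilon> / (C1 + 1)) powr p"
  have C1: "0 \<le> C1" by (rule C1_nonneg)
  have e'pos: "0 < e'" using e C1 by (simp add: e'_def)
  obtain N where N: "\<And>m n. m \<ge> N \<Longrightarrow> norm (\<Sum>k\<in>{m..<n}. cmod (x k) powr p) < e'"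
    using lp_seq_summable[OF x, unfolded summable_Cauchy] e'pos by blast
  show "\<exists>N. \<forall>m\<ge>N. \<forall>n. norm (\<Sum>k\<in>{m..<n}. cm (x k) (etak k)) < \<epsilon>"
  proof (intro exI allI impI)
    fix m n assume m: "N \<le> m"
    define T where "T = (\<Sum>k\<in>{m..<n}. cmod (x k) powr p)"
    have T0: "0 \<le> T" by (simp add: T_def sum_nonneg)
    have "T < e'" using N[OF m, of n] T0 by (simp add: T_def)
    then have "T powr (1/p) < e' powr (1/p)" using T0 p0 by (intro powr_less_mono2) auto
    also have "\<dots> = \<epsilon> / (C1 + 1)" using e C1 p0 by (simp add: e'_def powr_powr)
    finally have Tl: "T powr (1/p) < \<epsilon> / (C1 + 1)" .
    have "norm (\<Sum>k\<in>{m..<n}. cm (x k) (etak k)) \<le> C1 * T powr (1/p)" unfolding T_def by (rule column_block_bound)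
    also have "\<dots> \<le> C1 * (\<epsilon> / (C1 + 1))" using Tl C1 by (intro mult_left_mono) auto
    also have "\<dots> < \<epsilon>" using e C1 by (simp add: field_simps)
    finally show "norm (\<Sum>k\<in>{m..<n}. cm (x k) (etak k)) < \<epsilon>" .
  qed
qed

text \<open>J is linear, bounded by the column bound, and injective since \<open>\<phi>(e\<^sub>0\<^sub>j) (J x) = x\<^sub>j \<eta>\<close>.\<close>
lemma emb_linear:
  assumes x: "x \<in> lp_seq p" and y: "y \<in> lp_seq p"
  shows "emb (\<lambda>n. c * x n + y n) = cm c (emb x) + emb y"
proof -
  have "(\<lambda>k. cm (c * x k + y k) (etak k)) = (\<lambda>k. cm c (cm (x k) (etak k)) + cm (y k) (etak k))"
    by (simp add: cm_addl cm_mult)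
  moreover have "summable (\<lambda>k. cm c (cm (x k) (etak k)))"
    by (rule bounded_linear.summable[OF cm_bl emb_summable[OF x]])
  moreover have "(\<Sum>k. cm c (cm (x k) (etak k))) = cm c (emb x)"
    unfolding emb_def by (rule bounded_linear.suminf[OF cm_bl emb_summable[OF x], symmetric])
  ultimately show ?thesis unfolding emb_def using emb_summable[OF y]
    by (simp add: suminf_add[symmetric] emb_def)
qed

lemma emb_zero: "emb (\<lambda>n. 0) = 0" by (simp add: emb_def cm_zero_left)

lemma emb_diff:
  assumes "x \<in> lp_seq p" "y \<in> lp_seq p"
  shows "emb (\<lambda>n. x n - y n) = emb x - emb y"
  using emb_linear[OF assms(2,1), of "-1"] by (simp add: cm_minus_one)

lemma emb_upper:
  assumes x: "x \<in> lp_seq p"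
  shows "norm (emb x) \<le> C1 * lp_seq_norm p x"
proof -
  have lim: "(\<lambda>n. norm (\<Sum>k<n. cm (x k) (etak k))) \<longlonglongrightarrow> norm (emb x)"
    unfolding emb_def by (intro tendsto_norm summable_LIMSEQ emb_summable[OF x])
  show ?thesis
  proof (rule LIMSEQ_le_const2[OF lim], intro exI allI impI)
    fix n :: nat
    have "norm (\<Sum>k<n. cm (x k) (etak k)) \<le> C1 * (\<Sum>k<n. cmod (x k) powr p) powr (1/p)" by (rule column_bound)
    also have "\<dots> \<le> C1 * lp_seq_norm p x"
      unfolding lp_seq_norm_def using p0 C1_nonneg
      by (intro mult_left_mono powr_mono2 sum_le_suminf lp_seq_summable[OF x]) (auto intro: sum_nonneg)
    finally show "norm (\<Sum>k<n. cm (x k) (etak k)) \<le> C1 * lp_seq_norm p x" .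
  qed
qed

lemma phi_emb:
  assumes x: "x \<in> lp_seq p" and T: "T \<in> D"
  shows "\<phi> T (emb x) = (\<Sum>k. cm (x k) (\<phi> T (etak k)))"
  unfolding emb_def using bounded_linear.suminf[OF hom_bounded_linear[OF T] emb_summable[OF x]] phi_cm[OF T] by simp

lemma emb_coord:
  assumes x: "x \<in> lp_seq p"
  shows "\<phi> (e 0 j) (emb x) = cm (x j) eta"
proof -
  have "\<phi> (e 0 j) (emb x) = (\<Sum>k. cm (x k) (\<phi> (e 0 j) (etak k)))" by (rule phi_emb[OF x e_D])
  also have "\<dots> = (\<Sum>k. if k = j then cm (x j) eta else 0)"
    by (intro suminf_cong) (auto simp: e0j_etak cm_zero)
  also have "\<dots> = cm (x j) eta" using sums_single[of j "\<lambda>_. cm (x j) eta"] sums_unique by metis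
  finally show ?thesis .
qed

lemma emb_inj:
  assumes x: "x \<in> lp_seq p" and y: "y \<in> lp_seq p" and eq: "emb x = emb y"
  shows "x = y"
proof
  fix j
  have "cm (x j) eta = cm (y j) eta" using emb_coord[OF x, of j] emb_coord[OF y, of j] eq by simp
  then have "norm (cm (x j - y j) eta) = 0" by (simp add: cm_diffl)
  then have "cmod (x j - y j) = 0" using eta_ne by (simp add: cm_norm)
  then show "x j = y j" by simp
qed

definition C2 where "C2 = (2 / dl) / norm eta"

lemma C2_nonneg: "0 \<le> C2" using dl(1) by (simp add: C2_def)

text \<open>Lower bound: pair J x against the row \<open>\<Sum> dual_coeff(x\<^sub>j) \<phi>(e\<^sub>0\<^sub>j)\<close>.\<close>
lemma emb_lower_partial:
  assumes x: "x \<in> lp_seq p"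
  shows "(\<Sum>j<N. cmod (x j) powr p) powr (1/p) \<le> C2 * norm (emb x)"
proof -
  define SN where "SN = (\<Sum>j<N. cmod (x j) powr p)"
  have SN0: "0 \<le> SN" by (simp add: SN_def sum_nonneg)
  have "norm (\<Sum>j<N. cm (dual_coeff p (x j)) (\<phi> (e 0 j) (emb x)))
      \<le> (2 / dl) * SN powr ((p - 1) / p) * norm (emb x)"
    unfolding SN_def by (rule row_bound) (auto simp: dual_coeff_norm)
  moreover have "(\<Sum>j<N. cm (dual_coeff p (x j)) (\<phi> (e 0 j) (emb x))) = cm (complex_of_real SN) eta"
  proof -
    have "(\<Sum>j<N. cm (dual_coeff p (x j)) (\<phi> (e 0 j) (emb x))) = (\<Sum>j<N. cm (dual_coeff p (x j) * x j) eta)"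
      by (simp add: emb_coord[OF x] cm_mult)
    also have "\<dots> = cm (\<Sum>j<N. dual_coeff p (x j) * x j) eta" by (simp add: cm_sumr)
    also have "(\<Sum>j<N. dual_coeff p (x j) * x j) = complex_of_real SN"
      by (simp add: dual_coeff_mult[OF p0] SN_def)
    finally show ?thesis .
  qed
  ultimately have "SN * norm eta \<le> (2 / dl) * norm (emb x) * SN powr ((p - 1) / p)"
    using SN0 by (simp add: cm_norm mult_ac)
  then have "SN powr (1/p) \<le> (2 / dl) * norm (emb x) / norm eta"
    using eta_ne dl(1) by (intro powr_cancel_bound[OF p0 SN0]) auto
  then show ?thesis by (simp add: SN_def C2_def)
qed

lemma emb_lower:
  assumes x: "x \<in> lp_seq p"
  shows "lp_seq_norm p x \<le> C2 * norm (emb x)"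
proof -
  have "(\<lambda>N. (\<Sum>j<N. cmod (x j) powr p) powr (1/p)) \<longlonglongrightarrow> (\<Sum>j. cmod (x j) powr p) powr (1/p)"
    using p0 by (intro tendsto_powr2 summable_LIMSEQ lp_seq_summable[OF x] tendsto_const) (auto intro!: always_eventually sum_nonneg)
  then show ?thesis unfolding lp_seq_norm_def
    by (rule LIMSEQ_le_const2) (use emb_lower_partial[OF x] in auto)
qed

text \<open>The range of J is closed: if \<open>J x\<^sub>n \<rightarrow> l\<close>, the lower bound makes \<open>(x\<^sub>n)\<close> Cauchy in
  l^p, its limit y exists by completeness, and the upper bound gives \<open>J x\<^sub>n \<rightarrow> J y\<close>.\<close>
lemma emb_range_closed: "closed (emb ` lp_seq p)"
  unfolding closed_sequential_limits
proof (intro allI impI, elim conjE)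
  fix s l assume sV: "\<forall>n. s n \<in> emb ` lp_seq p" and sl: "s \<longlonglongrightarrow> l"
  have "\<forall>n. \<exists>x. x \<in> lp_seq p \<and> s n = emb x" using sV by blast
  from choice[OF this] obtain xs where "\<forall>n. xs n \<in> lp_seq p \<and> s n = emb (xs n)" by blast
  then have xs: "\<And>n. xs n \<in> lp_seq p" and sx: "\<And>n. s n = emb (xs n)" by auto
  have diff_le: "lp_seq_norm p (\<lambda>j. xs m j - xs n j) \<le> C2 * dist (s m) (s n)" for m n
    using emb_lower[OF lp_seq_diff[OF p xs xs]] by (simp add: emb_diff[OF xs xs] sx dist_norm)
  have cauchy: "\<exists>N. \<forall>m\<ge>N. \<forall>n\<ge>N. lp_seq_norm p (\<lambda>j. xs m j - xs n j) < \<epsilon>" if e: "0 < \<epsilon>" for \<epsilon>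
  proof -
    have "0 < \<epsilon> / (C2 + 1)" using e C2_nonneg by simp
    then obtain N where N: "\<forall>m\<ge>N. \<forall>n\<ge>N. dist (s m) (s n) < \<epsilon> / (C2 + 1)"
      using LIMSEQ_imp_Cauchy[OF sl] unfolding Cauchy_def by blast
    have "lp_seq_norm p (\<lambda>j. xs m j - xs n j) < \<epsilon>" if "N \<le> m" "N \<le> n" for m n
    proof -
      have "dist (s m) (s n) < \<epsilon> / (C2 + 1)" using N that by blast
      then have "C2 * dist (s m) (s n) \<le> C2 * (\<epsilon> / (C2 + 1))"
        using C2_nonneg by (intro mult_left_mono) auto
      also have "\<dots> < \<epsilon>" using e C2_nonneg by (simp add: field_simps)
      finally show ?thesis using diff_le[of m n] by linarith
    qed
    then show ?thesis by blast
  qed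
  obtain y where y: "y \<in> lp_seq p" and ylim: "(\<lambda>n. lp_seq_norm p (\<lambda>j. xs n j - y j)) \<longlonglongrightarrow> 0"
    by (rule lp_seq_complete[where xs = xs, OF p xs cauchy])
  have "(\<lambda>n. s n - emb y) \<longlonglongrightarrow> 0"
  proof (rule Lim_null_comparison)
    show "\<forall>\<^sub>F n in sequentially. norm (s n - emb y) \<le> C1 * lp_seq_norm p (\<lambda>j. xs n j - y j)"
      using emb_upper[OF lp_seq_diff[OF p xs y]] by (simp add: emb_diff[OF xs y] sx)
    show "(\<lambda>n. C1 * lp_seq_norm p (\<lambda>j. xs n j - y j)) \<longlonglongrightarrow> 0"
      using tendsto_mult_right_zero[OF ylim] by simp
  qed
  then have "s \<longlonglongrightarrow> emb y" by (simp add: LIM_zero_iff)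
  with sl have "l = emb y" by (rule LIMSEQ_unique)
  with y show "l \<in> emb ` lp_seq p" by blast
qed

lemma emb_lp_embeds: "lp_embeds p cm"
  unfolding lp_embeds_def
proof (rule exI[of _ "emb ` lp_seq p"], rule exI[of _ emb], intro conjI)
  show "closed (emb ` lp_seq p)" by (rule emb_range_closed)
  show "0 \<in> emb ` lp_seq p" using lp_seq_zero[OF p0] emb_zero by (metis image_eqI)
  show "\<forall>x\<in>emb ` lp_seq p. \<forall>y\<in>emb ` lp_seq p. x + y \<in> emb ` lp_seq p"
  proof (intro ballI)
    fix u v assume "u \<in> emb ` lp_seq p" "v \<in> emb ` lp_seq p"
    then obtain x y where x: "x \<in> lp_seq p" "u = emb x" and y: "y \<in> lp_seq p" "v = emb y" by blast
    have "u + v = emb (\<lambda>n. 1 * x n + y n)" using emb_linear[OF x(1) y(1), of 1] x y by (simp add: cm1)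
    then show "u + v \<in> emb ` lp_seq p" using lp_seq_lin[OF p x(1) y(1), of 1] by blast
  qed
  show "\<forall>c. \<forall>x\<in>emb ` lp_seq p. cm c x \<in> emb ` lp_seq p"
  proof (intro allI ballI)
    fix c u assume "u \<in> emb ` lp_seq p"
    then obtain x where x: "x \<in> lp_seq p" "u = emb x" by blast
    have "cm c u = emb (\<lambda>n. c * x n + 0)" using emb_linear[OF x(1) lp_seq_zero[OF p0], of c] x by (simp add: emb_zero)
    then show "cm c u \<in> emb ` lp_seq p" using lp_seq_lin[OF p x(1) lp_seq_zero[OF p0], of c] by blast
  qed
  show "\<forall>x\<in>lp_seq p. \<forall>y\<in>lp_seq p. \<forall>c. emb (\<lambda>n. c * x n + y n) = cm c (emb x) + emb y"
    using emb_linear by blast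
  show "bij_betw emb (lp_seq p) (emb ` lp_seq p)"
    unfolding bij_betw_def inj_on_def using emb_inj by blast
  show "\<exists>C. \<forall>x\<in>lp_seq p. norm (emb x) \<le> C * lp_seq_norm p x" using emb_upper by blast
  show "\<exists>C. \<forall>x\<in>lp_seq p. lp_seq_norm p x \<le> C * norm (emb x)" using emb_lower by blast
qed

end

theorem lemma9p1:
  fixes M :: "'a measure" and p :: real
    and Sg Tg :: "nat \<Rightarrow> ('a \<Rightarrow> complex) \<Rightarrow> ('a \<Rightarrow> complex)"
    and cm :: "complex \<Rightarrow> 'e::banach \<Rightarrow> 'e"
    and \<phi> :: "(('a \<Rightarrow> complex) \<Rightarrow> ('a \<Rightarrow> complex)) \<Rightarrow> 'e \<Rightarrow> 'e"
  assumes "1 \<le> p"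
    and "sigma_finite_measure M"
    and "spatial_rep M p Sg Tg"
    and "complex_scaling cm"
    and "cont_hom_nonzero M p (rho_closure M p Sg Tg) cm \<phi>"
  shows "lp_embeds p cm"
proof -
  obtain E F S g Tf S' Tf' where systems: "\<forall>j. spatial_op M p (E j) (F j) (S j) (g j) (Tf j) (Sg j) \<and>
     spatial_op M p (F j) (E j) (S' j) (\<lambda>x. inverse (Tf' j (g j) x)) (Tf' j) (Tg j)"
    using spatial_rep_data[OF assms(3)] by blast
  interpret spatial_hom M p Sg Tg E F S S' g Tf Tf' cm \<phi>
  proof (rule spatial_hom.intro)
    show "spatial_generators M p Sg Tg E F S S' g Tf Tf'"
      by (rule spatial_generators.intro[OF assms(1-3)]) (use systems in simp_all)
  qed (use assms(4,5) in \<open>simp_all add: complex_scaled_def spatial_hom_axioms_def\<close>)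
  show ?thesis by (rule emb_lp_embeds)
qed

end
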